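(* Let $m,k\in\mathbb{Z}$, let $(H,\alpha)$ be a monoidal Hom-bialgebra and $(A,\beta)$ a monoidal Hom-algebra which is a left weak $(H,\alpha)$-Hom-module algebra via $h\otimes a\mapsto h\cdot a$ and a left $(H,\alpha)$-Hom-comodule coalgebra with coaction $a\mapsto a_{(-1)}\otimes a_{(0)}$, and let $\sigma:H\otimes H\to A$ be linear. Suppose that $A\otimes H$, with the $(m,k)$-Hom-crossed product multiplication $(a\otimes h)(b\otimes g)=a[(\alpha^{m}(h_{11})\cdot\beta^{-2}(b))\sigma(\alpha^{k+1}(h_{12}),\alpha^{k}(g_{1}))]\otimes\alpha(h_{2}g_{2})$, unit $1_A\otimes1_H$, the $m$-Hom-smash coproduct comultiplication $\Delta(a\otimes h)=a_{1}\otimes\alpha^{m}(a_{2(-1)})\alpha^{-1}(h_{1})\otimes\beta(a_{2(0)})\otimes h_{2}$, counit $\varepsilon(a\otimes h)=\varepsilon(a)\varepsilon(h)$ and structure map $\beta\otimes\alpha$, is a monoidal Hom-bialgebra; denote it $A^{\sharp_\sigma}_{\rtimes}H$. Suppose $(H,\alpha)$ is a $\sigma$-monoidal Hom-Hopf algebra with $\sigma$-antipode $S_H$, and $S_A:A\to A$ is a linear map with $\beta\circ S_A=S_A\circ\beta$ which is a convolution inverse of $\mathrm{id}_A$, i.e. $S_A(a_1)a_2=\varepsilon(a)1_A=a_1S_A(a_2)$. Then $A^{\sharp_\sigma}_{\rtimes}H$ is a monoidal Hom-Hopf algebra with antipode $$S(a\otimes h)=\big(1_A\otimes S_H(\alpha^{m-1}(a_{(-1)})\alpha^{-2}(h))\big)\big(S_A(a_{(0)})\otimes1_H\big),$$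 the product being that of $A^{\sharp_\sigma}_{\rtimes}H$.
   Context: Field $k$; Sweedler notation. Monoidal Hom-algebra $(A,\beta)$: $\beta(a)(bc)=(ab)\beta(c)$, $\beta(ab)=\beta(a)\beta(b)$, $a1=1a=\beta(a)$, $\beta(1)=1$, $\beta$ a linear automorphism. Monoidal Hom-coalgebra $(C,\gamma)$: $\gamma^{-1}(c_1)\otimes\Delta(c_2)=\Delta(c_1)\otimes\gamma^{-1}(c_2)$, $\Delta\gamma=(\gamma\otimes\gamma)\Delta$, $c_1\varepsilon(c_2)=\gamma^{-1}(c)=\varepsilon(c_1)c_2$, $\varepsilon\gamma=\varepsilon$. Monoidal Hom-bialgebra: both with the same structure map and $\Delta,\varepsilon$ multiplicative and unital; a monoidal Hom-Hopf algebra additionally has a linear $S$ commuting with the structure map and with $S(x_1)x_2=\varepsilon(x)1=x_1S(x_2)$. Left weak $(H,\alpha)$-Hom-module algebra: $h\cdot(ab)=(h_1\cdot a)(h_2\cdot b)$, $h\cdot1_A=\varepsilon(h)1_A$. Left $(H,\alpha)$-Hom-comodule $(M,\mu)$: $\Delta_H(x_{(-1)})\otimes\mu^{-1}(x_{(0)})=\alpha^{-1}(x_{(-1)})\otimes x_{(0)(-1)}\otimes x_{(0)(0)}$, $\rho(\mu(x))=\alpha(x_{(-1)})\otimes\mu(x_{(0)})$, $\varepsilon(x_{(-1)})x_{(0)}=\mu^{-1}(x)$; Hom-comodule coalgebra: moreover $b_{(-1)}\otimes b_{(0)1}\otimes b_{(0)2}=b_{1(-1)}b_{2(-1)}\otimes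 b_{1(0)}\otimes b_{2(0)}$, $\varepsilon(b_{(0)})b_{(-1)}=\varepsilon(b)1_H$. $\sigma$-antipode: a linear map $S:H\to H$ is a $\sigma$-antipode of $(H,\alpha)$ if $\alpha\circ S=S\circ\alpha$ and, for all $h\in H$, $(\sigma\otimes m_H)\Delta_{H\otimes H}(\mathrm{id}_H\otimes S)\Delta_H(h)=\varepsilon(h)1_A\otimes1_H$ and $(\sigma\otimes m_H)\Delta_{H\otimes H}(S\otimes\mathrm{id}_H)\Delta_H(h)=\varepsilon(h)1_A\otimes1_H$, where $\Delta_{H\otimes H}(x\otimes y)=(x_1\otimes y_1)\otimes(x_2\otimes y_2)$ and $m_H$ is the multiplication of $H$; then $(H,\alpha)$ is called a $\sigma$-monoidal Hom-Hopf algebra. *)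

theory Defs
  imports Main "HOL-Library.Function_Algebras"
begin

text \<open>
  Vector spaces over a field 'k are modelled as a carrier set inside an ambient type
  of class ab_group_add together with a scalar multiplication.  Tensor products are
  modelled concretely: an element of V (x) W is represented by the functional it induces on
  bilinear forms V x W -> k (over a field these separate points of V (x) W), so the tensor
  product is a genuine subspace of the type ('v => 'w => 'k) => 'k.  Maps out of a
  tensor product (Sweedler sums) are computed via a chosen representation as a finite
  sum of simple tensors (well defined for bilinear maps).
\<close>

type_synonym ('k, 'v) vsp = "'v set \<times> ('k \<Rightarrow> 'v \<Rightarrow> 'v)"
type_synonym ('k, 'v, 'w) tensor = "('v \<Rightarrow> 'w \<Rightarrow> 'k) \<Rightarrow> 'k"
type_synonym ('k, 'u, 'v, 'w) tensor3 = "('u \<Rightarrow> 'v \<Rightarrow> 'w \<Rightarrow> 'k) \<Rightarrow> 'k"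

definition vs :: "('k::field, 'v::ab_group_add) vsp \<Rightarrow> bool" where
  "vs S \<longleftrightarrow> (let V = fst S; s = snd S in
     0 \<in> V \<and> (\<forall>x\<in>V. \<forall>y\<in>V. x + y \<in> V) \<and> (\<forall>c. \<forall>x\<in>V. s c x \<in> V) \<and>
     (\<forall>c. \<forall>x\<in>V. \<forall>y\<in>V. s c (x + y) = s c x + s c y) \<and>
     (\<forall>c d. \<forall>x\<in>V. s (c + d) x = s c x + s d x) \<and>
     (\<forall>c d. \<forall>x\<in>V. s c (s d x) = s (c * d) x) \<and>
     (\<forall>x\<in>V. s 1 x = x))"

definition Kspace :: "('k::field, 'k) vsp" where
  "Kspace = (UNIV, (\<lambda>c x. c * x))"

definition lin :: "('k::field, 'v::ab_group_add) vsp \<Rightarrow> ('k, 'w::ab_group_add) vsp \<Rightarrow> ('v \<Rightarrow> 'w) \<Rightarrow> bool" where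
  "lin S T f \<longleftrightarrow> (\<forall>x\<in>fst S. f x \<in> fst T) \<and>
     (\<forall>x\<in>fst S. \<forall>y\<in>fst S. f (x + y) = f x + f y) \<and>
     (\<forall>c. \<forall>x\<in>fst S. f (snd S c x) = snd T c (f x))"

definition bilin :: "('k::field, 'u::ab_group_add) vsp \<Rightarrow> ('k, 'v::ab_group_add) vsp \<Rightarrow>
     ('k, 'w::ab_group_add) vsp \<Rightarrow> ('u \<Rightarrow> 'v \<Rightarrow> 'w) \<Rightarrow> bool" where
  "bilin S T U f \<longleftrightarrow> (\<forall>x\<in>fst S. lin T U (f x)) \<and> (\<forall>y\<in>fst T. lin S U (\<lambda>x. f x y))"

definition trilin :: "('k::field, 'u::ab_group_add) vsp \<Rightarrow> ('k, 'v::ab_group_add) vsp \<Rightarrow>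
     ('k, 'w::ab_group_add) vsp \<Rightarrow> ('k, 'z::ab_group_add) vsp \<Rightarrow> ('u \<Rightarrow> 'v \<Rightarrow> 'w \<Rightarrow> 'z) \<Rightarrow> bool" where
  "trilin S T U W f \<longleftrightarrow> (\<forall>x\<in>fst S. bilin T U W (f x)) \<and>
     (\<forall>y\<in>fst T. \<forall>z\<in>fst U. lin S W (\<lambda>x. f x y z))"

definition tens :: "('k::field, 'v::ab_group_add) vsp \<Rightarrow> ('k, 'w::ab_group_add) vsp \<Rightarrow>
     'v \<Rightarrow> 'w \<Rightarrow> ('k, 'v, 'w) tensor" where
  "tens S T x y = (\<lambda>B. if bilin S T Kspace B then B x y else 0)"

definition tens3 :: "('k::field, 'u::ab_group_add) vsp \<Rightarrow> ('k, 'v::ab_group_add) vsp \<Rightarrow>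
     ('k, 'w::ab_group_add) vsp \<Rightarrow> 'u \<Rightarrow> 'v \<Rightarrow> 'w \<Rightarrow> ('k, 'u, 'v, 'w) tensor3" where
  "tens3 S T U x y z = (\<lambda>B. if trilin S T U Kspace B then B x y z else 0)"

definition tscale :: "'k::field \<Rightarrow> ('b \<Rightarrow> 'k) \<Rightarrow> ('b \<Rightarrow> 'k)" where
  "tscale c f = (\<lambda>B. c * f B)"

definition is_rep :: "('k::field, 'v::ab_group_add) vsp \<Rightarrow> ('k, 'w::ab_group_add) vsp \<Rightarrow>
     ('k, 'v, 'w) tensor \<Rightarrow> ('v \<times> 'w) list \<Rightarrow> bool" where
  "is_rep S T t xs \<longleftrightarrow> set xs \<subseteq> fst S \<times> fst T \<and>
     t = sum_list (map (\<lambda>(x, y). tens S T x y) xs)"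

definition tspace :: "('k::field, 'v::ab_group_add) vsp \<Rightarrow> ('k, 'w::ab_group_add) vsp \<Rightarrow>
     ('k, ('k, 'v, 'w) tensor) vsp" where
  "tspace S T = ({t. \<exists>xs. is_rep S T t xs}, tscale)"

definition lift2 :: "('k::field, 'v::ab_group_add) vsp \<Rightarrow> ('k, 'w::ab_group_add) vsp \<Rightarrow>
     ('v \<Rightarrow> 'w \<Rightarrow> 'u::ab_group_add) \<Rightarrow> ('k, 'v, 'w) tensor \<Rightarrow> 'u" where
  "lift2 S T f t = sum_list (map (\<lambda>(x, y). f x y) (SOME xs. is_rep S T t xs))"

definition zpow :: "'v set \<Rightarrow> ('v \<Rightarrow> 'v) \<Rightarrow> int \<Rightarrow> 'v \<Rightarrow> 'v" where
  "zpow V f n = (if 0 \<le> n then f ^^ nat n else (inv_into V f) ^^ nat (- n))"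

definition hom_algebra :: "('k::field, 'v::ab_group_add) vsp \<Rightarrow> ('v \<Rightarrow> 'v \<Rightarrow> 'v) \<Rightarrow> 'v \<Rightarrow> ('v \<Rightarrow> 'v) \<Rightarrow> bool" where
  "hom_algebra S mu u be \<longleftrightarrow> vs S \<and> bilin S S S mu \<and> u \<in> fst S \<and> lin S S be \<and>
     bij_betw be (fst S) (fst S) \<and>
     (\<forall>a\<in>fst S. \<forall>b\<in>fst S. \<forall>c\<in>fst S. mu (be a) (mu b c) = mu (mu a b) (be c)) \<and>
     (\<forall>a\<in>fst S. \<forall>b\<in>fst S. be (mu a b) = mu (be a) (be b)) \<and>
     (\<forall>a\<in>fst S. mu a u = be a \<and> mu u a = be a) \<and> be u = u"

definition hom_coalgebra :: "('k::field, 'v::ab_group_add) vsp \<Rightarrow> ('v \<Rightarrow> ('k, 'v, 'v) tensor) \<Rightarrow>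
     ('v \<Rightarrow> 'k) \<Rightarrow> ('v \<Rightarrow> 'v) \<Rightarrow> bool" where
  "hom_coalgebra S D e g \<longleftrightarrow> vs S \<and> lin S (tspace S S) D \<and> lin S Kspace e \<and> lin S S g \<and>
     bij_betw g (fst S) (fst S) \<and>
     (\<forall>c\<in>fst S.
        lift2 S S (\<lambda>x y. lift2 S S (\<lambda>y1 y2. tens3 S S S (inv_into (fst S) g x) y1 y2) (D y)) (D c)
      = lift2 S S (\<lambda>x y. lift2 S S (\<lambda>x1 x2. tens3 S S S x1 x2 (inv_into (fst S) g y)) (D x)) (D c)) \<and>
     (\<forall>c\<in>fst S. D (g c) = lift2 S S (\<lambda>x y. tens S S (g x) (g y)) (D c)) \<and>
     (\<forall>c\<in>fst S. lift2 S S (\<lambda>x y. snd S (e y) x) (D c) = inv_into (fst S) g c \<and>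
                 lift2 S S (\<lambda>x y. snd S (e x) y) (D c) = inv_into (fst S) g c) \<and>
     (\<forall>c\<in>fst S. e (g c) = e c)"

definition hom_bialgebra :: "('k::field, 'v::ab_group_add) vsp \<Rightarrow> ('v \<Rightarrow> 'v \<Rightarrow> 'v) \<Rightarrow> 'v \<Rightarrow>
     ('v \<Rightarrow> ('k, 'v, 'v) tensor) \<Rightarrow> ('v \<Rightarrow> 'k) \<Rightarrow> ('v \<Rightarrow> 'v) \<Rightarrow> bool" where
  "hom_bialgebra S mu u D e g \<longleftrightarrow> hom_algebra S mu u g \<and> hom_coalgebra S D e g \<and>
     (\<forall>x\<in>fst S. \<forall>y\<in>fst S. D (mu x y) =
        lift2 S S (\<lambda>x1 x2. lift2 S S (\<lambda>y1 y2. tens S S (mu x1 y1) (mu x2 y2)) (D y)) (D x)) \<and>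
     D u = tens S S u u \<and>
     (\<forall>x\<in>fst S. \<forall>y\<in>fst S. e (mu x y) = e x * e y) \<and> e u = 1"

definition hom_hopf :: "('k::field, 'v::ab_group_add) vsp \<Rightarrow> ('v \<Rightarrow> 'v \<Rightarrow> 'v) \<Rightarrow> 'v \<Rightarrow>
     ('v \<Rightarrow> ('k, 'v, 'v) tensor) \<Rightarrow> ('v \<Rightarrow> 'k) \<Rightarrow> ('v \<Rightarrow> 'v) \<Rightarrow> ('v \<Rightarrow> 'v) \<Rightarrow> bool" where
  "hom_hopf S mu u D e g Sa \<longleftrightarrow> hom_bialgebra S mu u D e g \<and> lin S S Sa \<and>
     (\<forall>x\<in>fst S. g (Sa x) = Sa (g x)) \<and>
     (\<forall>x\<in>fst S. lift2 S S (\<lambda>x1 x2. mu (Sa x1) x2) (D x) = snd S (e x) u \<and>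
                lift2 S S (\<lambda>x1 x2. mu x1 (Sa x2)) (D x) = snd S (e x) u)"

definition weak_hom_module_algebra ::
  "('k::field, 'h::ab_group_add) vsp \<Rightarrow> ('h \<Rightarrow> ('k, 'h, 'h) tensor) \<Rightarrow> ('h \<Rightarrow> 'k) \<Rightarrow>
   ('k, 'a::ab_group_add) vsp \<Rightarrow> ('a \<Rightarrow> 'a \<Rightarrow> 'a) \<Rightarrow> 'a \<Rightarrow> ('h \<Rightarrow> 'a \<Rightarrow> 'a) \<Rightarrow> bool" where
  "weak_hom_module_algebra SH DH eH SA muA uA act \<longleftrightarrow> bilin SH SA SA act \<and>
     (\<forall>h\<in>fst SH. \<forall>a\<in>fst SA. \<forall>b\<in>fst SA.
        act h (muA a b) = lift2 SH SH (\<lambda>h1 h2. muA (act h1 a) (act h2 b)) (DH h)) \<and>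
     (\<forall>h\<in>fst SH. act h uA = snd SA (eH h) uA)"

definition hom_comodule ::
  "('k::field, 'h::ab_group_add) vsp \<Rightarrow> ('h \<Rightarrow> ('k, 'h, 'h) tensor) \<Rightarrow> ('h \<Rightarrow> 'k) \<Rightarrow> ('h \<Rightarrow> 'h) \<Rightarrow>
   ('k, 'a::ab_group_add) vsp \<Rightarrow> ('a \<Rightarrow> 'a) \<Rightarrow> ('a \<Rightarrow> ('k, 'h, 'a) tensor) \<Rightarrow> bool" where
  "hom_comodule SH DH eH al SM mu rho \<longleftrightarrow> vs SM \<and> lin SM SM mu \<and> bij_betw mu (fst SM) (fst SM) \<and>
     lin SM (tspace SH SM) rho \<and>
     (\<forall>x\<in>fst SM.
        lift2 SH SM (\<lambda>y z. lift2 SH SH (\<lambda>y1 y2. tens3 SH SH SM y1 y2 (inv_into (fst SM) mu z)) (DH y)) (rho x)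
      = lift2 SH SM (\<lambda>y z. lift2 SH SM (\<lambda>z1 z2. tens3 SH SH SM (inv_into (fst SH) al y) z1 z2) (rho z)) (rho x)) \<and>
     (\<forall>x\<in>fst SM. rho (mu x) = lift2 SH SM (\<lambda>y z. tens SH SM (al y) (mu z)) (rho x)) \<and>
     (\<forall>x\<in>fst SM. lift2 SH SM (\<lambda>y z. snd SM (eH y) z) (rho x) = inv_into (fst SM) mu x)"

definition hom_comodule_coalgebra ::
  "('k::field, 'h::ab_group_add) vsp \<Rightarrow> ('h \<Rightarrow> 'h \<Rightarrow> 'h) \<Rightarrow> 'h \<Rightarrow> ('h \<Rightarrow> ('k, 'h, 'h) tensor) \<Rightarrow>
   ('h \<Rightarrow> 'k) \<Rightarrow> ('h \<Rightarrow> 'h) \<Rightarrow>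
   ('k, 'a::ab_group_add) vsp \<Rightarrow> ('a \<Rightarrow> ('k, 'a, 'a) tensor) \<Rightarrow> ('a \<Rightarrow> 'k) \<Rightarrow> ('a \<Rightarrow> 'a) \<Rightarrow>
   ('a \<Rightarrow> ('k, 'h, 'a) tensor) \<Rightarrow> bool" where
  "hom_comodule_coalgebra SH muH uH DH eH al SA DA eA be rho \<longleftrightarrow>
     hom_coalgebra SA DA eA be \<and> hom_comodule SH DH eH al SA be rho \<and>
     (\<forall>b\<in>fst SA.
        lift2 SH SA (\<lambda>y z. lift2 SA SA (\<lambda>z1 z2. tens3 SH SA SA y z1 z2) (DA z)) (rho b)
      = lift2 SA SA (\<lambda>b1 b2. lift2 SH SA (\<lambda>y1 z1. lift2 SH SA (\<lambda>y2 z2.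
            tens3 SH SA SA (muH y1 y2) z1 z2) (rho b2)) (rho b1)) (DA b)) \<and>
     (\<forall>b\<in>fst SA. lift2 SH SA (\<lambda>y z. snd SH (eA z) y) (rho b) = snd SH (eA b) uH)"

definition sigma_antipode ::
  "('k::field, 'h::ab_group_add) vsp \<Rightarrow> ('h \<Rightarrow> 'h \<Rightarrow> 'h) \<Rightarrow> 'h \<Rightarrow> ('h \<Rightarrow> ('k, 'h, 'h) tensor) \<Rightarrow>
   ('h \<Rightarrow> 'k) \<Rightarrow> ('h \<Rightarrow> 'h) \<Rightarrow> ('k, 'a::ab_group_add) vsp \<Rightarrow> 'a \<Rightarrow> ('h \<Rightarrow> 'h \<Rightarrow> 'a) \<Rightarrow> ('h \<Rightarrow> 'h) \<Rightarrow> bool" where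
  "sigma_antipode SH muH uH DH eH al SA uA sig SH' \<longleftrightarrow> lin SH SH SH' \<and>
     (\<forall>h\<in>fst SH. al (SH' h) = SH' (al h)) \<and>
     (\<forall>h\<in>fst SH.
        lift2 SH SH (\<lambda>x y. lift2 SH SH (\<lambda>x1 x2. lift2 SH SH (\<lambda>y1 y2.
            tens SA SH (sig x1 y1) (muH x2 y2)) (DH (SH' y))) (DH x)) (DH h)
        = tens SA SH (snd SA (eH h) uA) uH) \<and>
     (\<forall>h\<in>fst SH.
        lift2 SH SH (\<lambda>x y. lift2 SH SH (\<lambda>x1 x2. lift2 SH SH (\<lambda>y1 y2.
            tens SA SH (sig x1 y1) (muH x2 y2)) (DH y)) (DH (SH' x))) (DH h)
        = tens SA SH (snd SA (eH h) uA) uH)"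

definition cp_mult ::
  "('k::field, 'a::ab_group_add) vsp \<Rightarrow> ('k, 'h::ab_group_add) vsp \<Rightarrow> ('a \<Rightarrow> 'a \<Rightarrow> 'a) \<Rightarrow> ('h \<Rightarrow> 'h \<Rightarrow> 'h) \<Rightarrow>
   ('h \<Rightarrow> ('k, 'h, 'h) tensor) \<Rightarrow> ('h \<Rightarrow> 'a \<Rightarrow> 'a) \<Rightarrow> ('h \<Rightarrow> 'h \<Rightarrow> 'a) \<Rightarrow> ('h \<Rightarrow> 'h) \<Rightarrow> ('a \<Rightarrow> 'a) \<Rightarrow>
   int \<Rightarrow> int \<Rightarrow> ('k, 'a, 'h) tensor \<Rightarrow> ('k, 'a, 'h) tensor \<Rightarrow> ('k, 'a, 'h) tensor" where
  "cp_mult SA SH muA muH DH act sig al be m k t1 t2 =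
     lift2 SA SH (\<lambda>a h. lift2 SA SH (\<lambda>b g.
       lift2 SH SH (\<lambda>x h2. lift2 SH SH (\<lambda>h11 h12. lift2 SH SH (\<lambda>g1 g2.
         tens SA SH
           (muA a (muA (act (zpow (fst SH) al m h11) (zpow (fst SA) be (-2) b))
                       (sig (zpow (fst SH) al (k + 1) h12) (zpow (fst SH) al k g1))))
           (al (muH h2 g2))) (DH g)) (DH x)) (DH h)) t2) t1"

definition cp_unit :: "('k::field, 'a::ab_group_add) vsp \<Rightarrow> ('k, 'h::ab_group_add) vsp \<Rightarrow> 'a \<Rightarrow> 'h \<Rightarrow> ('k, 'a, 'h) tensor" where
  "cp_unit SA SH uA uH = tens SA SH uA uH"

definition cp_comult ::
  "('k::field, 'a::ab_group_add) vsp \<Rightarrow> ('k, 'h::ab_group_add) vsp \<Rightarrow> ('a \<Rightarrow> ('k, 'a, 'a) tensor) \<Rightarrow>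
   ('a \<Rightarrow> ('k, 'h, 'a) tensor) \<Rightarrow> ('h \<Rightarrow> 'h \<Rightarrow> 'h) \<Rightarrow> ('h \<Rightarrow> ('k, 'h, 'h) tensor) \<Rightarrow> ('h \<Rightarrow> 'h) \<Rightarrow> ('a \<Rightarrow> 'a) \<Rightarrow>
   int \<Rightarrow> ('k, 'a, 'h) tensor \<Rightarrow> ('k, ('k, 'a, 'h) tensor, ('k, 'a, 'h) tensor) tensor" where
  "cp_comult SA SH DA rho muH DH al be m t =
     lift2 SA SH (\<lambda>a h. lift2 SA SA (\<lambda>a1 a2. lift2 SH SA (\<lambda>y z. lift2 SH SH (\<lambda>h1 h2.
        tens (tspace SA SH) (tspace SA SH)
          (tens SA SH a1 (muH (zpow (fst SH) al m y) (zpow (fst SH) al (-1) h1)))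
          (tens SA SH (be z) h2)) (DH h)) (rho a2)) (DA a)) t"

definition cp_counit ::
  "('k::field, 'a::ab_group_add) vsp \<Rightarrow> ('k, 'h::ab_group_add) vsp \<Rightarrow> ('a \<Rightarrow> 'k) \<Rightarrow> ('h \<Rightarrow> 'k) \<Rightarrow>
   ('k, 'a, 'h) tensor \<Rightarrow> 'k" where
  "cp_counit SA SH eA eH t = lift2 SA SH (\<lambda>a h. eA a * eH h) t"

definition cp_struct ::
  "('k::field, 'a::ab_group_add) vsp \<Rightarrow> ('k, 'h::ab_group_add) vsp \<Rightarrow> ('a \<Rightarrow> 'a) \<Rightarrow> ('h \<Rightarrow> 'h) \<Rightarrow>
   ('k, 'a, 'h) tensor \<Rightarrow> ('k, 'a, 'h) tensor" where
  "cp_struct SA SH be al t = lift2 SA SH (\<lambda>a h. tens SA SH (be a) (al h)) t"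

definition cp_antipode ::
  "('k::field, 'a::ab_group_add) vsp \<Rightarrow> ('k, 'h::ab_group_add) vsp \<Rightarrow> ('a \<Rightarrow> 'a \<Rightarrow> 'a) \<Rightarrow> 'a \<Rightarrow>
   ('h \<Rightarrow> 'h \<Rightarrow> 'h) \<Rightarrow> 'h \<Rightarrow> ('h \<Rightarrow> ('k, 'h, 'h) tensor) \<Rightarrow> ('h \<Rightarrow> 'a \<Rightarrow> 'a) \<Rightarrow> ('h \<Rightarrow> 'h \<Rightarrow> 'a) \<Rightarrow>
   ('h \<Rightarrow> 'h) \<Rightarrow> ('a \<Rightarrow> 'a) \<Rightarrow> ('a \<Rightarrow> ('k, 'h, 'a) tensor) \<Rightarrow> ('h \<Rightarrow> 'h) \<Rightarrow> ('a \<Rightarrow> 'a) \<Rightarrow>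
   int \<Rightarrow> int \<Rightarrow> ('k, 'a, 'h) tensor \<Rightarrow> ('k, 'a, 'h) tensor" where
  "cp_antipode SA SH muA uA muH uH DH act sig al be rho SH' SA' m k t =
     lift2 SA SH (\<lambda>a h. lift2 SH SA (\<lambda>y z.
        cp_mult SA SH muA muH DH act sig al be m k
          (tens SA SH uA (SH' (muH (zpow (fst SH) al (m - 1) y) (zpow (fst SH) al (-2) h))))
          (tens SA SH (SA' z) uH)) (rho a)) t"

end

theory Submission
  imports Defs "HOL.Vector_Spaces"
begin

text \<open>
  Both sides of each antipode identity are linear, so it suffices to check them on simple tensors
  \<open>a \<otimes> h\<close>.  For \<open>S(x\<^sub>1) x\<^sub>2\<close>, the Hom-associativity of the crossed product moves the factor
  \<open>S\<^sub>A(a\<^sub>1\<^sub>(\<^sub>0\<^sub>)) \<otimes> 1\<close> next to \<open>\<beta>(a\<^sub>2\<^sub>(\<^sub>0\<^sub>)) \<otimes> h\<^sub>2\<close>; the comodule coalgebra axiom merges the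
  coactions of \<open>a\<^sub>1\<close> and \<open>a\<^sub>2\<close> into one coaction of \<open>a\<close>, after which \<open>S\<^sub>A(a\<^sub>1) a\<^sub>2 = \<epsilon>(a) 1\<close>,
  the counit property of the coaction and the \<sigma>-antipode identity for \<open>(S\<^sub>H \<otimes> id) \<Delta>\<close> collapse
  everything to \<open>\<epsilon>(a) \<epsilon>(h) 1 \<otimes> 1\<close>.  For \<open>x\<^sub>1 S(x\<^sub>2)\<close> the coassociativity of the coaction
  plays the role of the comodule coalgebra axiom, and the \<sigma>-antipode identity for
  \<open>(id \<otimes> S\<^sub>H) \<Delta>\<close> and \<open>a\<^sub>1 S\<^sub>A(a\<^sub>2) = \<epsilon>(a) 1\<close> finish the computation.  The only products
  that have to be evaluated are those with a unit in one tensor factor,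
  \<open>(b \<otimes> 1)(c \<otimes> g) = b c \<otimes> \<alpha>(g)\<close> and \<open>(b \<otimes> u)(1 \<otimes> v)\<close>, in which the action disappears.
\<close>

section \<open>Linear algebra on carrier sets\<close>

lemma vsD:
  assumes "vs S"
  shows "0 \<in> fst S" "\<And>x y. x\<in>fst S \<Longrightarrow> y\<in>fst S \<Longrightarrow> x+y \<in> fst S"
    "\<And>c x. x\<in>fst S \<Longrightarrow> snd S c x \<in> fst S"
    "\<And>c x y. x\<in>fst S \<Longrightarrow> y\<in>fst S \<Longrightarrow> snd S c (x+y) = snd S c x + snd S c y"
    "\<And>c d x. x\<in>fst S \<Longrightarrow> snd S (c+d) x = snd S c x + snd S d x"
    "\<And>c d x. x\<in>fst S \<Longrightarrow> snd S c (snd S d x) = snd S (c*d) x"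
    "\<And>x. x\<in>fst S \<Longrightarrow> snd S 1 x = x"
  using assms unfolding vs_def Let_def by auto

lemma vs_zero_scale: assumes "vs S" "x \<in> fst S" shows "snd S 0 x = 0"
proof -
  have "snd S (0+0) x = snd S 0 x + snd S 0 x" using vsD(5)[OF assms] .
  then show ?thesis by simp
qed

lemma vs_scale_zero: assumes "vs S" shows "snd S c 0 = 0"
proof -
  have "snd S c (0+0) = snd S c 0 + snd S c 0" using vsD(4)[OF assms vsD(1)[OF assms] vsD(1)[OF assms]] .
  then show ?thesis by simp
qed

lemma vs_neg: assumes "vs S" "x \<in> fst S" shows "snd S (-1) x = - x"
proof -
  have "snd S (-1 + 1) x = snd S (-1) x + snd S 1 x" using vsD(5)[OF assms(1)] assms(2) by blast
  then have "0 = snd S (-1) x + x" using vs_zero_scale[OF assms] vsD(7)[OF assms] by simp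
  then show ?thesis by (simp add: eq_neg_iff_add_eq_0)
qed

lemma vs_uminus: assumes "vs S" "x \<in> fst S" shows "- x \<in> fst S"
  using vs_neg[OF assms] vsD(3)[OF assms(1) assms(2)] by metis

lemma vs_diff: assumes "vs S" "x \<in> fst S" "y \<in> fst S" shows "x - y \<in> fst S"
  using vsD(2)[OF assms(1) assms(2) vs_uminus[OF assms(1,3)]] by simp

lemma vs_sum_list: assumes "vs S" "\<forall>z\<in>set zs. g z \<in> fst S"
  shows "sum_list (map g zs) \<in> fst S"
  using assms(2) by (induction zs) (auto intro: vsD[OF assms(1)])

lemma vs_scale_sum_list: assumes "vs S" "\<forall>z\<in>set zs. g z \<in> fst S"
  shows "snd S c (sum_list (map g zs)) = sum_list (map (\<lambda>z. snd S c (g z)) zs)"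
  using assms(2)
proof (induction zs)
  case Nil then show ?case using vs_scale_zero[OF assms(1)] by simp
next
  case (Cons a zs)
  then have "sum_list (map g zs) \<in> fst S" "g a \<in> fst S" using vs_sum_list[OF assms(1)] by auto
  then show ?case using Cons vsD(4)[OF assms(1)] by simp
qed

lemma linD: assumes "lin S T f"
  shows "\<And>x. x\<in>fst S \<Longrightarrow> f x \<in> fst T" "\<And>x y. x\<in>fst S \<Longrightarrow> y\<in>fst S \<Longrightarrow> f (x+y) = f x + f y"
    "\<And>c x. x\<in>fst S \<Longrightarrow> f (snd S c x) = snd T c (f x)"
  using assms unfolding lin_def by auto

lemma lin_zero: assumes "lin S T f" "vs S" shows "f 0 = 0"
proof -
  have "f (0+0) = f 0 + f 0" using linD(2)[OF assms(1)] vsD(1)[OF assms(2)] by blast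
  then show ?thesis by simp
qed

lemma lin_sum_list: assumes "lin S T f" "vs S" "\<forall>z\<in>set zs. g z \<in> fst S"
  shows "f (sum_list (map g zs)) = sum_list (map (\<lambda>z. f (g z)) zs)"
  using assms(3)
proof (induction zs)
  case Nil then show ?case using lin_zero[OF assms(1,2)] by simp
next
  case (Cons a zs)
  then have "sum_list (map g zs) \<in> fst S" "g a \<in> fst S" using vs_sum_list[OF assms(2)] by auto
  then show ?case using Cons linD(2)[OF assms(1)] by simp
qed

lemma lin_diff: assumes "lin S T f" "vs S" "x \<in> fst S" "y \<in> fst S" shows "f (x - y) = f x - f y"
proof -
  have "f ((x - y) + y) = f (x - y) + f y" using linD(2)[OF assms(1) vs_diff[OF assms(2,3,4)] assms(4)] .
  then show ?thesis by (simp add: eq_diff_eq)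
qed

lemma lin_comp: "lin S T f \<Longrightarrow> lin T U g \<Longrightarrow> lin S U (\<lambda>x. g (f x))"
  unfolding lin_def by auto

lemma bilinD: assumes "bilin S T U f"
  shows "\<And>x. x \<in> fst S \<Longrightarrow> lin T U (f x)" "\<And>y. y \<in> fst T \<Longrightarrow> lin S U (\<lambda>x. f x y)"
  using assms unfolding bilin_def by auto

lemma bilin_mem: "bilin S T U f \<Longrightarrow> x \<in> fst S \<Longrightarrow> y \<in> fst T \<Longrightarrow> f x y \<in> fst U"
  using bilinD(1) linD(1) by blast

lemma bilinI: "(\<And>x. x \<in> fst S \<Longrightarrow> lin T U (f x)) \<Longrightarrow> (\<And>y. y \<in> fst T \<Longrightarrow> lin S U (\<lambda>x. f x y)) \<Longrightarrow> bilin S T U f"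
  unfolding bilin_def by auto

lemma bilin_comp: assumes f: "bilin S T U f" and g: "lin U V g" shows "bilin S T V (\<lambda>x y. g (f x y))"
proof (rule bilinI)
  fix x assume x: "x \<in> fst S" show "lin T V (\<lambda>y. g (f x y))" using lin_comp[OF bilinD(1)[OF f x] g] .
next
  fix y assume y: "y \<in> fst T" show "lin S V (\<lambda>x. g (f x y))" using lin_comp[OF bilinD(2)[OF f y] g] .
qed

lemma lin_id: "lin R R (\<lambda>x. x)"
  unfolding lin_def by auto

lemma lin_comp_bilin1: "bilin S T U g \<Longrightarrow> lin R S f \<Longrightarrow> y \<in> fst T \<Longrightarrow> lin R U (\<lambda>x. g (f x) y)"
  using lin_comp bilinD(2) by blast

lemma lin_comp_bilin2: "bilin S T U g \<Longrightarrow> x \<in> fst S \<Longrightarrow> lin R T f \<Longrightarrow> lin R U (\<lambda>y. g x (f y))"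
  using lin_comp bilinD(1) by blast

section \<open>Tensor products and Sweedler sums\<close>

text \<open>\<open>lift2 S T f\<close> sums \<open>f\<close> over a chosen representation of a tensor.  It does not depend on
  that choice as soon as the linear functionals on the target separate points.  This holds for every
  vector space whose carrier is a whole type, by extending a functional from a line
  (\<open>separating_full\<close>), and for tensor products, whose elements are themselves functionals.\<close>

definition separating :: "('k::field, 'u::ab_group_add) vsp \<Rightarrow> bool" where
  "separating U \<longleftrightarrow> vs U \<and> (\<forall>d\<in>fst U. (\<forall>\<phi>. lin U Kspace \<phi> \<longrightarrow> \<phi> d = 0) \<longrightarrow> d = 0)"

definition fun_space :: "('k::field, ('b \<Rightarrow> 'k)) vsp" where "fun_space = (UNIV, tscale)"

lemma sum_list_apply: "(sum_list (map g zs)) B = sum_list (map (\<lambda>z. g z B) zs)"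
  by (induction zs) auto

lemma is_rep_eval: assumes "is_rep S T t xs" "bilin S T Kspace B"
  shows "t B = sum_list (map (\<lambda>(x,y). B x y) xs)"
proof -
  have "t B = sum_list (map (\<lambda>z. (case z of (x,y) \<Rightarrow> tens S T x y) B) xs)"
    using assms(1) unfolding is_rep_def by (simp add: sum_list_apply)
  also have "\<dots> = sum_list (map (\<lambda>(x,y). B x y) xs)"
    by (rule arg_cong[where f=sum_list], rule map_cong) (auto simp: tens_def assms(2))
  finally show ?thesis .
qed

lemma Kspace_simps[simp]: "fst Kspace = UNIV" "snd Kspace c x = c * x"
  unfolding Kspace_def by auto

lemma lift2_rep_indep:
  assumes U: "separating U" and f: "bilin S T U f" and r1: "is_rep S T t xs" and r2: "is_rep S T t ys"
  shows "sum_list (map (\<lambda>(x,y). f x y) xs) = sum_list (map (\<lambda>(x,y). f x y) ys)"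
proof -
  have vU: "vs U" using U separating_def by blast
  have memx: "\<forall>z\<in>set xs. (\<lambda>(x,y). f x y) z \<in> fst U" using r1 f unfolding is_rep_def
    by (auto intro: bilin_mem)
  have memy: "\<forall>z\<in>set ys. (\<lambda>(x,y). f x y) z \<in> fst U" using r2 f unfolding is_rep_def
    by (auto intro: bilin_mem)
  let ?d = "sum_list (map (\<lambda>(x,y). f x y) xs) - sum_list (map (\<lambda>(x,y). f x y) ys)"
  have dU: "?d \<in> fst U" by (intro vs_diff vU vs_sum_list memx memy)
  have "\<phi> ?d = 0" if ph: "lin U Kspace \<phi>" for \<phi>
  proof -
    have B: "bilin S T Kspace (\<lambda>x y. \<phi> (f x y))" by (rule bilin_comp[OF f ph])
    have "\<phi> ?d = \<phi> (sum_list (map (\<lambda>(x,y). f x y) xs)) - \<phi> (sum_list (map (\<lambda>(x,y). f x y) ys))"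
      by (rule lin_diff[OF ph vU]) (intro vs_sum_list vU memx memy)+
    also have "\<dots> = sum_list (map (\<lambda>z. \<phi> ((\<lambda>(x,y). f x y) z)) xs) - sum_list (map (\<lambda>z. \<phi> ((\<lambda>(x,y). f x y) z)) ys)"
      by (simp add: lin_sum_list[OF ph vU memx] lin_sum_list[OF ph vU memy])
    also have "\<dots> = t (\<lambda>x y. \<phi> (f x y)) - t (\<lambda>x y. \<phi> (f x y))"
    proof -
      have "sum_list (map (\<lambda>z. \<phi> ((\<lambda>(x,y). f x y) z)) xs) = t (\<lambda>x y. \<phi> (f x y))"
        using is_rep_eval[OF r1 B] by (simp add: split_def)
      moreover have "sum_list (map (\<lambda>z. \<phi> ((\<lambda>(x,y). f x y) z)) ys) = t (\<lambda>x y. \<phi> (f x y))"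
        using is_rep_eval[OF r2 B] by (simp add: split_def)
      ultimately show ?thesis by simp
    qed
    finally show ?thesis by simp
  qed
  then have "?d = 0" using U dU unfolding separating_def by blast
  then show ?thesis by simp
qed

lemma lift2_rep:
  assumes "separating U" "bilin S T U f" "is_rep S T t xs"
  shows "lift2 S T f t = sum_list (map (\<lambda>(x,y). f x y) xs)"
proof -
  have "is_rep S T t (SOME xs. is_rep S T t xs)" using assms(3) by (rule someI)
  then show ?thesis unfolding lift2_def using lift2_rep_indep[OF assms(1,2) _ assms(3)] by blast
qed

lemma tspace_simps: "fst (tspace S T) = {t. \<exists>xs. is_rep S T t xs}" "snd (tspace S T) = tscale"
  unfolding tspace_def by auto

lemma fun_space_simps[simp]: "fst fun_space = UNIV" "snd fun_space = tscale"
  unfolding fun_space_def by auto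

lemma tspace_rep: "t \<in> fst (tspace S T) \<Longrightarrow> \<exists>xs. is_rep S T t xs"
  by (simp add: tspace_simps)

lemma is_rep_tens: "x \<in> fst S \<Longrightarrow> y \<in> fst T \<Longrightarrow> is_rep S T (tens S T x y) [(x,y)]"
  unfolding is_rep_def by simp

lemma is_rep_Nil: "is_rep S T 0 []" unfolding is_rep_def by simp

lemma is_rep_append: "is_rep S T t xs \<Longrightarrow> is_rep S T t' ys \<Longrightarrow> is_rep S T (t + t') (xs @ ys)"
  unfolding is_rep_def by auto

lemma tscale_simps:
  "tscale c (x + y) = tscale c x + tscale c y" "tscale (c + d) x = tscale c x + tscale d x"
  "tscale c (tscale d x) = tscale (c * d) x" "tscale 1 x = x" "tscale c 0 = 0"
  unfolding tscale_def by (auto simp: fun_eq_iff algebra_simps)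

lemma tscale_sum_list: "tscale c (sum_list (map g zs)) = sum_list (map (\<lambda>z. tscale c (g z)) zs)"
  by (induction zs) (auto simp: tscale_def fun_eq_iff distrib_left sum_list_apply)

lemma tens_scale1: assumes "vs S" "x \<in> fst S" "y \<in> fst T"
  shows "tens S T (snd S c x) y = tscale c (tens S T x y)"
proof (rule ext)
  fix B show "tens S T (snd S c x) y B = tscale c (tens S T x y) B"
  proof (cases "bilin S T Kspace B")
    case True
    then have "lin S Kspace (\<lambda>x. B x y)" using assms(3) bilinD(2) by blast
    then show ?thesis using True assms(2) linD(3) by (fastforce simp: tens_def tscale_def)
  qed (simp add: tens_def tscale_def)
qed

lemma tens_scale2: assumes "vs T" "x \<in> fst S" "y \<in> fst T"
  shows "tens S T x (snd T c y) = tscale c (tens S T x y)"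
proof (rule ext)
  fix B show "tens S T x (snd T c y) B = tscale c (tens S T x y) B"
  proof (cases "bilin S T Kspace B")
    case True
    then have "lin T Kspace (B x)" using assms(2) bilinD(1) by blast
    then show ?thesis using True assms(3) linD(3) by (fastforce simp: tens_def tscale_def)
  qed (simp add: tens_def tscale_def)
qed

lemma tens_add1: assumes "x \<in> fst S" "x' \<in> fst S" "y \<in> fst T"
  shows "tens S T (x + x') y = tens S T x y + tens S T x' y"
proof (rule ext)
  fix B show "tens S T (x + x') y B = (tens S T x y + tens S T x' y) B"
  proof (cases "bilin S T Kspace B")
    case True
    then have "lin S Kspace (\<lambda>x. B x y)" using assms(3) bilinD(2) by blast
    then show ?thesis using True assms linD(2) by (fastforce simp: tens_def)
  qed (simp add: tens_def)
qed

lemma tens_add2: assumes "x \<in> fst S" "y \<in> fst T" "y' \<in> fst T"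
  shows "tens S T x (y + y') = tens S T x y + tens S T x y'"
proof (rule ext)
  fix B show "tens S T x (y + y') B = (tens S T x y + tens S T x y') B"
  proof (cases "bilin S T Kspace B")
    case True
    then have "lin T Kspace (B x)" using assms(1) bilinD(1) by blast
    then show ?thesis using True assms linD(2) by (fastforce simp: tens_def)
  qed (simp add: tens_def)
qed

lemma is_rep_scale: assumes "vs S" "is_rep S T t xs"
  shows "is_rep S T (tscale c t) (map (\<lambda>(x,y). (snd S c x, y)) xs)"
proof -
  have "tscale c t = sum_list (map (\<lambda>z. tscale c ((\<lambda>(x,y). tens S T x y) z)) xs)"
    using assms(2) unfolding is_rep_def by (simp add: tscale_sum_list)
  also have "\<dots> = sum_list (map (\<lambda>(x,y). tens S T x y) (map (\<lambda>(x,y). (snd S c x, y)) xs))"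
    using assms(2) unfolding is_rep_def
    by (auto simp: tens_scale1[OF assms(1)] intro!: arg_cong[where f=sum_list] map_cong)
  finally show ?thesis using assms vsD(3)[OF assms(1)] unfolding is_rep_def by auto
qed

lemma vs_tspace: assumes "vs S" shows "vs (tspace S T)"
proof -
  have a: "tscale c t \<in> fst (tspace S T)" if t: "t \<in> fst (tspace S T)" for c t
  proof -
    obtain xs where "is_rep S T t xs" using t tspace_rep by blast
    from is_rep_scale[OF assms this, of c] show ?thesis unfolding tspace_simps by blast
  qed
  have b: "t \<in> fst (tspace S T) \<Longrightarrow> t' \<in> fst (tspace S T) \<Longrightarrow> t + t' \<in> fst (tspace S T)" for t t'
    unfolding tspace_simps using is_rep_append by blast
  have c: "0 \<in> fst (tspace S T)" unfolding tspace_simps using is_rep_Nil by blast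
  show ?thesis unfolding vs_def Let_def tspace_simps(2)
    apply (intro conjI ballI allI)
    apply (rule c) apply (erule (1) b) apply (erule a) apply (simp_all only: tscale_simps)
    done
qed

lemma vs_fun_space: "vs (fun_space :: ('k::field, 'b \<Rightarrow> 'k) vsp)"
  unfolding vs_def Let_def fun_space_simps
  apply (intro conjI ballI allI)
  apply (simp_all only: tscale_simps UNIV_I)
  done

lemma separating_fun_space: "separating (fun_space :: ('k::field, 'b \<Rightarrow> 'k) vsp)"
  unfolding separating_def
proof (intro conjI vs_fun_space ballI impI)
  fix d :: "'b \<Rightarrow> 'k" assume H: "\<forall>\<phi>. lin fun_space Kspace \<phi> \<longrightarrow> \<phi> d = 0"
  have L: "lin fun_space Kspace (\<lambda>t::'b \<Rightarrow> 'k. t B)" for B unfolding lin_def by (simp add: tscale_def)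
  have "d B = 0" for B using H[rule_format, OF L[of B]] by simp
  then show "d = 0" by (auto simp: fun_eq_iff)
qed

lemma separating_tspace: assumes "vs S" shows "separating (tspace S T)"
  unfolding separating_def
proof (intro conjI vs_tspace[OF assms] ballI impI)
  fix d assume H: "\<forall>\<phi>. lin (tspace S T) Kspace \<phi> \<longrightarrow> \<phi> d = 0"
  have L: "lin (tspace S T) Kspace (\<lambda>t. t B)" for B unfolding lin_def tspace_simps(2) by (simp add: tscale_def)
  have "d B = 0" for B using H[rule_format, OF L[of B]] by simp
  then show "d = 0" by (auto simp: fun_eq_iff)
qed

lemma separating_Kspace: "separating (Kspace :: ('k::field, 'k) vsp)"
  unfolding separating_def
proof (intro conjI ballI impI)
  show "vs (Kspace :: ('k::field, 'k) vsp)" unfolding vs_def Let_def by (auto simp: algebra_simps)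
  fix d :: 'k assume H: "\<forall>\<phi>. lin Kspace Kspace \<phi> \<longrightarrow> \<phi> d = 0"
  have "lin Kspace Kspace (\<lambda>x::'k. x)" unfolding lin_def by auto
  then show "d = 0" using H by blast
qed

lemma separating_full: assumes "vs (UNIV :: 'v::ab_group_add set, s :: 'k::field \<Rightarrow> 'v \<Rightarrow> 'v)"
  shows "separating (UNIV :: 'v set, s)"
  unfolding separating_def
proof (intro conjI assms ballI impI)
  fix d :: 'v assume H: "\<forall>\<phi>. lin (UNIV, s) Kspace \<phi> \<longrightarrow> \<phi> d = 0"
  interpret V: vector_space s using assms unfolding vs_def Let_def
    by unfold_locales auto
  interpret K: vector_space "(*) :: 'k \<Rightarrow> 'k \<Rightarrow> 'k" by unfold_locales (auto simp: algebra_simps)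
  interpret P: vector_space_pair s "(*) :: 'k \<Rightarrow> 'k \<Rightarrow> 'k" by unfold_locales
  show "d = 0"
  proof (rule ccontr)
    assume "d \<noteq> 0"
    then have "V.independent {d}" using V.independent_insert[of d "{}"] by simp
    then obtain g where g: "Vector_Spaces.linear s (*) g" "g d = 1"
      using P.linear_independent_extend[of "{d}" "\<lambda>_. 1"] by auto
    then have "lin (UNIV, s) Kspace g" unfolding lin_def
      by (auto simp: linear_iff)
    then show False using H g by auto
  qed
qed

lemma lift2_tens:
  assumes "separating U" "bilin S T U f" "x \<in> fst S" "y \<in> fst T"
  shows "lift2 S T f (tens S T x y) = f x y"
  using lift2_rep[OF assms(1,2) is_rep_tens[OF assms(3,4)]] by simp

lemma lift2_cong:
  assumes t: "t \<in> fst (tspace S T)" and fg: "\<And>x y. x \<in> fst S \<Longrightarrow> y \<in> fst T \<Longrightarrow> f x y = g x y"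
  shows "lift2 S T f t = lift2 S T g t"
proof -
  have "is_rep S T t (SOME xs. is_rep S T t xs)" using t tspace_rep someI_ex by metis
  then have "set (SOME xs. is_rep S T t xs) \<subseteq> fst S \<times> fst T" unfolding is_rep_def by blast
  then show ?thesis unfolding lift2_def
    by (intro arg_cong[where f=sum_list] map_cong[OF refl]) (use fg in auto)
qed

lemma separating_vs: "separating U \<Longrightarrow> vs U" unfolding separating_def by blast

lemma lift2_mem:
  assumes U: "separating U" and f: "bilin S T U f" and t: "t \<in> fst (tspace S T)"
  shows "lift2 S T f t \<in> fst U"
proof -
  obtain xs where r: "is_rep S T t xs" using t tspace_rep by blast
  show ?thesis unfolding lift2_rep[OF U f r] using r f unfolding is_rep_def
    by (intro vs_sum_list separating_vs[OF U]) (auto intro: bilin_mem)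
qed

lemma lin_lift2:
  assumes S: "vs S" and U: "separating U" and f: "bilin S T U f"
  shows "lin (tspace S T) U (lift2 S T f)"
  unfolding lin_def
proof (intro conjI ballI allI)
  fix t assume "t \<in> fst (tspace S T)" then show "lift2 S T f t \<in> fst U" by (rule lift2_mem[OF U f])
next
  fix t t' assume t: "t \<in> fst (tspace S T)" and t': "t' \<in> fst (tspace S T)"
  obtain xs where r: "is_rep S T t xs" using t tspace_rep by blast
  obtain ys where r': "is_rep S T t' ys" using t' tspace_rep by blast
  show "lift2 S T f (t + t') = lift2 S T f t + lift2 S T f t'"
    unfolding lift2_rep[OF U f r] lift2_rep[OF U f r'] lift2_rep[OF U f is_rep_append[OF r r']] by simp
next
  fix c t assume t: "t \<in> fst (tspace S T)"
  obtain xs where r: "is_rep S T t xs" using t tspace_rep by blast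
  have mem: "\<forall>z\<in>set xs. (\<lambda>(x,y). f x y) z \<in> fst U" using r f unfolding is_rep_def
    by (auto intro: bilin_mem)
  have "lift2 S T f (snd (tspace S T) c t) = sum_list (map (\<lambda>(x,y). f x y) (map (\<lambda>(x,y). (snd S c x, y)) xs))"
    unfolding tspace_simps(2) by (rule lift2_rep[OF U f is_rep_scale[OF S r]])
  also have "\<dots> = sum_list (map (\<lambda>z. snd U c ((\<lambda>(x,y). f x y) z)) xs)"
  proof -
    have "(\<lambda>(x,y). f x y) ((\<lambda>(x,y). (snd S c x, y)) z) = snd U c ((\<lambda>(x,y). f x y) z)" if z: "z \<in> set xs" for z
    proof -
      obtain x y where z': "z = (x,y)" by fastforce
      have xy: "x \<in> fst S" "y \<in> fst T" using r z z' unfolding is_rep_def by auto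
      show ?thesis using linD(3)[OF bilinD(2)[OF f xy(2)] xy(1)] z' by simp
    qed
    then show ?thesis by (simp add: comp_def cong: map_cong)
  qed
  also have "\<dots> = snd U c (lift2 S T f t)"
    unfolding lift2_rep[OF U f r] by (rule vs_scale_sum_list[OF separating_vs[OF U] mem, symmetric])
  finally show "lift2 S T f (snd (tspace S T) c t) = snd U c (lift2 S T f t)" .
qed

lemma lift2_comm:
  assumes S: "vs S" and U: "separating U" and V: "separating V" and f: "bilin S T U f" and ph: "lin U V \<phi>"
    and t: "t \<in> fst (tspace S T)"
  shows "\<phi> (lift2 S T f t) = lift2 S T (\<lambda>x y. \<phi> (f x y)) t"
proof -
  obtain xs where r: "is_rep S T t xs" using t tspace_rep by blast
  have mem: "\<forall>z\<in>set xs. (\<lambda>(x,y). f x y) z \<in> fst U" using r f unfolding is_rep_def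
    by (auto intro: bilin_mem)
  show ?thesis
    unfolding lift2_rep[OF U f r] lift2_rep[OF V bilin_comp[OF f ph] r] lin_sum_list[OF ph separating_vs[OF U] mem]
    by (simp add: split_def)
qed

lemma sum_list_swap:
  fixes f :: "'a \<Rightarrow> 'b \<Rightarrow> 'c::comm_monoid_add"
  shows
  "sum_list (map (\<lambda>a. sum_list (map (\<lambda>b. f a b) ys)) xs) = sum_list (map (\<lambda>b. sum_list (map (\<lambda>a. f a b) xs)) ys)"
proof (induction xs)
  case (Cons a xs)
  have "sum_list (map (\<lambda>b. f a b + sum_list (map (\<lambda>a. f a b) xs)) ys) = sum_list (map (\<lambda>b. f a b) ys) + sum_list (map (\<lambda>b. sum_list (map (\<lambda>a. f a b) xs)) ys)"
    by (rule sum_list_addf)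
  then show ?case using Cons by simp
qed simp

lemma lin_lift2_param:
  assumes R: "vs R" and U: "separating U" and t: "t \<in> fst (tspace S T)"
    and F1: "\<forall>x\<in>fst R. bilin S T U (F x)" and F2: "\<forall>a\<in>fst S. \<forall>b\<in>fst T. lin R U (\<lambda>x. F x a b)"
  shows "lin R U (\<lambda>x. lift2 S T (F x) t)"
proof -
  obtain xs where r: "is_rep S T t xs" using t tspace_rep by blast
  have xs: "\<forall>z\<in>set xs. fst z \<in> fst S \<and> snd z \<in> fst T" using r unfolding is_rep_def by auto
  have e: "lift2 S T (F x) t = sum_list (map (\<lambda>z. F x (fst z) (snd z)) xs)" if "x \<in> fst R" for x
    using lift2_rep[OF U F1[rule_format, OF that] r] by (simp add: split_def)
  have mem: "\<forall>z\<in>set xs. F x (fst z) (snd z) \<in> fst U" if "x \<in> fst R" for x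
    using xs F1 that bilin_mem by blast
  show ?thesis unfolding lin_def
  proof (intro conjI ballI allI)
    fix x assume x: "x \<in> fst R" show "lift2 S T (F x) t \<in> fst U"
      unfolding e[OF x] by (rule vs_sum_list[OF separating_vs[OF U] mem[OF x]])
  next
    fix x y assume x: "x \<in> fst R" and y: "y \<in> fst R"
    have "sum_list (map (\<lambda>z. F (x + y) (fst z) (snd z)) xs) = sum_list (map (\<lambda>z. F x (fst z) (snd z) + F y (fst z) (snd z)) xs)"
      by (rule arg_cong[where f=sum_list], rule map_cong[OF refl]) (use xs F2 x y linD(2) in blast)
    then show "lift2 S T (F (x + y)) t = lift2 S T (F x) t + lift2 S T (F y) t"
      unfolding e[OF x] e[OF y] e[OF vsD(2)[OF R x y]] by (simp add: sum_list_addf)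
  next
    fix c x assume x: "x \<in> fst R"
    have "sum_list (map (\<lambda>z. F (snd R c x) (fst z) (snd z)) xs) = sum_list (map (\<lambda>z. snd U c (F x (fst z) (snd z))) xs)"
      by (rule arg_cong[where f=sum_list], rule map_cong[OF refl]) (use xs F2 x linD(3) in blast)
    then show "lift2 S T (F (snd R c x)) t = snd U c (lift2 S T (F x) t)"
      unfolding e[OF x] e[OF vsD(3)[OF R x]] vs_scale_sum_list[OF separating_vs[OF U] mem[OF x]] .
  qed
qed

lemma bilin_lift2_param:
  assumes X: "vs X" and Y: "vs Y" and U: "separating U" and t: "t \<in> fst (tspace Z W)"
    and F1: "\<forall>x\<in>fst X. \<forall>y\<in>fst Y. bilin Z W U (F x y)"
    and F2: "\<forall>z\<in>fst Z. \<forall>w\<in>fst W. bilin X Y U (\<lambda>x y. F x y z w)"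
  shows "bilin X Y U (\<lambda>x y. lift2 Z W (F x y) t)"
proof (rule bilinI)
  fix x assume x: "x \<in> fst X"
  show "lin Y U (\<lambda>y. lift2 Z W (F x y) t)"
  proof (rule lin_lift2_param[OF Y U t]; intro ballI)
    fix y assume "y \<in> fst Y" then show "bilin Z W U (F x y)" using F1 x by blast
  next
    fix z w assume "z \<in> fst Z" "w \<in> fst W"
    from bilinD(1)[OF F2[rule_format, OF this] x] show "lin Y U (\<lambda>y. F x y z w)" by simp
  qed
next
  fix y assume y: "y \<in> fst Y"
  show "lin X U (\<lambda>x. lift2 Z W (F x y) t)"
  proof (rule lin_lift2_param[OF X U t]; intro ballI)
    fix x assume "x \<in> fst X" then show "bilin Z W U (F x y)" using F1 y by blast
  next
    fix z w assume "z \<in> fst Z" "w \<in> fst W"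
    from bilinD(2)[OF F2[rule_format, OF this] y] show "lin X U (\<lambda>x. F x y z w)" by simp
  qed
qed

lemma lift2_swap:
  assumes X: "vs X" and Y: "vs Y" and U: "separating U" and t1: "t1 \<in> fst (tspace X Y)" and t2: "t2 \<in> fst (tspace Z W)"
    and F1: "\<forall>x\<in>fst X. \<forall>y\<in>fst Y. bilin Z W U (F x y)"
    and F2: "\<forall>z\<in>fst Z. \<forall>w\<in>fst W. bilin X Y U (\<lambda>x y. F x y z w)"
    and Z: "vs Z" and W: "vs W"
  shows "lift2 X Y (\<lambda>x y. lift2 Z W (F x y) t2) t1 = lift2 Z W (\<lambda>z w. lift2 X Y (\<lambda>x y. F x y z w) t1) t2"
proof -
  obtain xs where r1: "is_rep X Y t1 xs" using t1 tspace_rep by blast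
  obtain zs where r2: "is_rep Z W t2 zs" using t2 tspace_rep by blast
  have B1: "bilin X Y U (\<lambda>x y. lift2 Z W (F x y) t2)" by (rule bilin_lift2_param[OF X Y U t2 F1 F2])
  have B2: "bilin Z W U (\<lambda>z w. lift2 X Y (\<lambda>x y. F x y z w) t1)"
  proof (rule bilin_lift2_param[OF Z W U t1]; intro ballI)
    fix x y assume "x \<in> fst X" "y \<in> fst Y" then show "bilin Z W U (\<lambda>z w. F x y z w)" using F1 by simp
  next
    fix z w assume "z \<in> fst Z" "w \<in> fst W" then show "bilin X Y U (\<lambda>x y. F x y z w)" using F2 by blast
  qed
  have xs: "\<forall>z\<in>set xs. fst z \<in> fst X \<and> snd z \<in> fst Y" using r1 unfolding is_rep_def by auto
  have zs: "\<forall>z\<in>set zs. fst z \<in> fst Z \<and> snd z \<in> fst W" using r2 unfolding is_rep_def by auto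
  have "lift2 X Y (\<lambda>x y. lift2 Z W (F x y) t2) t1 = sum_list (map (\<lambda>a. sum_list (map (\<lambda>b. F (fst a) (snd a) (fst b) (snd b)) zs)) xs)"
    unfolding lift2_rep[OF U B1 r1]
  proof (rule arg_cong[where f=sum_list], rule map_cong[OF refl])
    fix a assume "a \<in> set xs"
    then have "bilin Z W U (F (fst a) (snd a))" using xs F1 by blast
    from lift2_rep[OF U this r2] show "(\<lambda>(x, y). lift2 Z W (F x y) t2) a = sum_list (map (\<lambda>b. F (fst a) (snd a) (fst b) (snd b)) zs)"
      by (simp add: split_def)
  qed
  also have "\<dots> = sum_list (map (\<lambda>b. sum_list (map (\<lambda>a. F (fst a) (snd a) (fst b) (snd b)) xs)) zs)"
    by (rule sum_list_swap)
  also have "\<dots> = lift2 Z W (\<lambda>z w. lift2 X Y (\<lambda>x y. F x y z w) t1) t2"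
    unfolding lift2_rep[OF U B2 r2]
  proof (rule arg_cong[where f=sum_list], rule map_cong[OF refl])
    fix b assume "b \<in> set zs"
    then have "bilin X Y U (\<lambda>x y. F x y (fst b) (snd b))" using zs F2 by blast
    from lift2_rep[OF U this r1] show "sum_list (map (\<lambda>a. F (fst a) (snd a) (fst b) (snd b)) xs) = (\<lambda>(z, w). lift2 X Y (\<lambda>x y. F x y z w) t1) b"
      by (simp add: split_def)
  qed
  finally show ?thesis .
qed

lemma tens_mem: "x \<in> fst S \<Longrightarrow> y \<in> fst T \<Longrightarrow> tens S T x y \<in> fst (tspace S T)"
  unfolding tspace_simps using is_rep_tens by blast

lemma lin_tens1: assumes "vs S" "y \<in> fst T" shows "lin S (tspace S T) (\<lambda>x. tens S T x y)"
  unfolding lin_def tspace_simps(2)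
  using tens_mem[OF _ assms(2)] tens_add1[OF _ _ assms(2)] tens_scale1[OF assms(1) _ assms(2)] by blast

lemma lin_tens2: assumes "vs T" "x \<in> fst S" shows "lin T (tspace S T) (\<lambda>y. tens S T x y)"
  unfolding lin_def tspace_simps(2)
  using tens_mem[OF assms(2)] tens_add2[OF assms(2)] tens_scale2[OF assms(1) assms(2)] by blast

lemma bilin_tens: assumes "vs S" "vs T" shows "bilin S T (tspace S T) (tens S T)"
proof (rule bilinI)
  fix x assume "x \<in> fst S" from lin_tens2[OF assms(2) this] show "lin T (tspace S T) (tens S T x)" by simp
next
  fix y assume "y \<in> fst T" from lin_tens1[OF assms(1) this] show "lin S (tspace S T) (\<lambda>x. tens S T x y)" .
qed



lemma lin_lift2_comp:
  assumes "lin S (tspace X Y) D" "vs X" "separating U" "bilin X Y U G"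
  shows "lin S U (\<lambda>x. lift2 X Y G (D x))"
  by (rule lin_comp[OF assms(1) lin_lift2[OF assms(2,3,4)]])

lemma lift2_lift2_tens:
  assumes X: "vs X" "vs S" "vs T" and U: "separating U" and f: "bilin S T U f"
    and g: "bilin X Y (tspace S T) (\<lambda>x y. tens S T (g x y) (h x y))"
    and gh: "\<forall>x\<in>fst X. \<forall>y\<in>fst Y. g x y \<in> fst S \<and> h x y \<in> fst T"
    and t: "t \<in> fst (tspace X Y)"
  shows "lift2 S T f (lift2 X Y (\<lambda>x y. tens S T (g x y) (h x y)) t) = lift2 X Y (\<lambda>x y. f (g x y) (h x y)) t"
proof -
  have "lift2 S T f (lift2 X Y (\<lambda>x y. tens S T (g x y) (h x y)) t) = lift2 X Y (\<lambda>x y. lift2 S T f (tens S T (g x y) (h x y))) t"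
    by (rule lift2_comm[OF X(1) separating_tspace[OF X(2)] U g lin_lift2[OF X(2) U f] t])
  also have "\<dots> = lift2 X Y (\<lambda>x y. f (g x y) (h x y)) t"
    by (rule lift2_cong[OF t]) (use lift2_tens[OF U f] gh in blast)
  finally show ?thesis .
qed

lemma lift2_comm_cong:
  "vs S \<Longrightarrow> separating U \<Longrightarrow> separating V \<Longrightarrow> bilin S T U f \<Longrightarrow> lin U V \<phi> \<Longrightarrow> t \<in> fst (tspace S T)
   \<Longrightarrow> (\<And>x y. x \<in> fst S \<Longrightarrow> y \<in> fst T \<Longrightarrow> \<phi> (f x y) = g x y) \<Longrightarrow> \<phi> (lift2 S T f t) = lift2 S T g t"
proof -
  assume a: "vs S" "separating U" "separating V" "bilin S T U f" "lin U V \<phi>" "t \<in> fst (tspace S T)"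
    and p: "\<And>x y. x \<in> fst S \<Longrightarrow> y \<in> fst T \<Longrightarrow> \<phi> (f x y) = g x y"
  have "\<phi> (lift2 S T f t) = lift2 S T (\<lambda>x y. \<phi> (f x y)) t" by (rule lift2_comm[OF a])
  also have "\<dots> = lift2 S T g t" by (rule lift2_cong[OF a(6) p])
  finally show ?thesis .
qed

lemma lift2_id: assumes "vs S" "vs T" "t \<in> fst (tspace S T)" shows "lift2 S T (\<lambda>x y. tens S T x y) t = t"
proof -
  obtain xs where r: "is_rep S T t xs" using assms(3) tspace_rep by blast
  show ?thesis using lift2_rep[OF separating_tspace[OF assms(1)] bilin_tens[OF assms(1,2)] r] r
    unfolding is_rep_def by simp
qed

lemma tens3_eval: "trilin S T U Kspace B \<Longrightarrow> tens3 S T U x y z B = B x y z"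
  unfolding tens3_def by simp

lemma lin_fun_spaceI: "(\<And>B. lin S Kspace (\<lambda>x. f x B)) \<Longrightarrow> lin S fun_space f"
  unfolding lin_def by (auto simp: fun_eq_iff tscale_def)

lemma trilinI:
  "(\<And>x. x \<in> fst S \<Longrightarrow> bilin T U W (f x)) \<Longrightarrow>
   (\<And>y z. y \<in> fst T \<Longrightarrow> z \<in> fst U \<Longrightarrow> lin S W (\<lambda>x. f x y z)) \<Longrightarrow> trilin S T U W f"
  unfolding trilin_def by blast

lemma trilinD:
  assumes "trilin S T U W f"
  shows "x \<in> fst S \<Longrightarrow> bilin T U W (f x)"
    and "y \<in> fst T \<Longrightarrow> z \<in> fst U \<Longrightarrow> lin S W (\<lambda>x. f x y z)"
  using assms unfolding trilin_def by blast+

lemma trilin_comp: "trilin S T U V f \<Longrightarrow> lin V W \<phi> \<Longrightarrow> trilin S T U W (\<lambda>x y z. \<phi> (f x y z))"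
  unfolding trilin_def using bilin_comp lin_comp by blast

lemma trilin_tens3: "trilin S T U fun_space (tens3 S T U)"
proof (intro trilinI bilinI lin_fun_spaceI)
  fix B x y z
  show "lin U Kspace (\<lambda>z. tens3 S T U x y z B)" if "x \<in> fst S" "y \<in> fst T"
    by (cases "trilin S T U Kspace B") (use that in \<open>auto simp: tens3_def trilin_def bilin_def lin_def\<close>)
  show "lin T Kspace (\<lambda>y. tens3 S T U x y z B)" if "x \<in> fst S" "z \<in> fst U"
    by (cases "trilin S T U Kspace B") (use that in \<open>auto simp: tens3_def trilin_def bilin_def lin_def\<close>)
  show "lin S Kspace (\<lambda>x. tens3 S T U x y z B)" if "y \<in> fst T" "z \<in> fst U"
    by (cases "trilin S T U Kspace B") (use that in \<open>auto simp: tens3_def trilin_def lin_def\<close>)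
qed

lemma lin_eval: "lin fun_space Kspace (\<lambda>t. t B)" unfolding lin_def by (simp add: tscale_def)

lemma separating_eqI: assumes "separating U" "x \<in> fst U" "y \<in> fst U" "\<And>\<phi>. lin U Kspace \<phi> \<Longrightarrow> \<phi> x = \<phi> y"
  shows "x = y"
proof -
  have d: "x - y \<in> fst U" using vs_diff[OF separating_vs[OF assms(1)] assms(2,3)] .
  have "\<phi> (x - y) = 0" if "lin U Kspace \<phi>" for \<phi>
    using lin_diff[OF that separating_vs[OF assms(1)] assms(2,3)] assms(4)[OF that] by simp
  then have "x - y = 0" using assms(1) d unfolding separating_def by blast
  then show ?thesis by simp
qed

lemma lin_ext_tens:
  assumes S: "vs S" and f: "lin (tspace S T) U f" and g: "lin (tspace S T) U g"
    and fg: "\<And>x y. x \<in> fst S \<Longrightarrow> y \<in> fst T \<Longrightarrow> f (tens S T x y) = g (tens S T x y)"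
    and t: "t \<in> fst (tspace S T)"
  shows "f t = g t"
proof -
  obtain xs where r: "is_rep S T t xs" using t tspace_rep by blast
  have mem: "\<forall>z\<in>set xs. (\<lambda>(x,y). tens S T x y) z \<in> fst (tspace S T)"
    using r unfolding is_rep_def by (auto intro: tens_mem)
  have "f t = sum_list (map (\<lambda>z. f ((\<lambda>(x,y). tens S T x y) z)) xs)"
    using r lin_sum_list[OF f vs_tspace[OF S] mem] unfolding is_rep_def by simp
  also have "\<dots> = sum_list (map (\<lambda>z. g ((\<lambda>(x,y). tens S T x y) z)) xs)"
    by (rule arg_cong[where f=sum_list], rule map_cong[OF refl]) (use r fg in \<open>auto simp: is_rep_def\<close>)
  also have "\<dots> = g t"
    using r lin_sum_list[OF g vs_tspace[OF S] mem] unfolding is_rep_def by simp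
  finally show ?thesis .
qed

section \<open>Integer powers of a bijection\<close>

lemma zpow_0[simp]: "zpow V f 0 x = x" unfolding zpow_def by simp

lemma zpow_succ: assumes "bij f" shows "zpow UNIV f (n + 1) x = f (zpow UNIV f n x)"
proof (cases "0 \<le> n")
  case True
  then have "nat (n + 1) = Suc (nat n)" by simp
  then show ?thesis using True unfolding zpow_def by simp
next
  case False
  then have e: "nat (- n) = Suc (nat (- (n + 1)))" by simp
  have "zpow UNIV f n x = inv f (zpow UNIV f (n + 1) x)"
  proof (cases "n + 1 = 0")
    case True
    then have "nat (- n) = 1" by simp
    then show ?thesis using True False unfolding zpow_def by simp
  next
    case F: False
    then show ?thesis using False unfolding zpow_def e by simp
  qed
  then show ?thesis using assms by (simp add: bij_inv_eq_iff)
qed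

lemma zpow_pred: assumes "bij f" shows "zpow UNIV f (n - 1) x = inv f (zpow UNIV f n x)"
  using zpow_succ[OF assms, of "n - 1" x] assms by (simp add: bij_inv_eq_iff)

lemma zpow_add: assumes "bij f" shows "zpow UNIV f (a + b) x = zpow UNIV f a (zpow UNIV f b x)"
proof (induction a rule: int_induct[where k=0])
  case base then show ?case by simp
next
  case (step1 i) then show ?case using zpow_succ[OF assms] by (metis add.commute add.left_commute)
next
  case (step2 i) then show ?case using zpow_pred[OF assms] by (metis add_diff_eq diff_add_eq)
qed

lemma zpow_1: assumes "bij f" shows "zpow UNIV f 1 x = f x"
  using zpow_succ[OF assms, of 0] by simp

lemma zpow_m1: assumes "bij f" shows "zpow UNIV f (-1) x = inv f x"
  using zpow_pred[OF assms, of 0] by simp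

lemma zpow_induct:
  assumes "bij f" and "P (\<lambda>x. x)" and "\<And>g. P g \<Longrightarrow> P (\<lambda>x. f (g x))" and "\<And>g. P g \<Longrightarrow> P (\<lambda>x. inv f (g x))"
  shows "P (zpow UNIV f n)"
proof (induction n rule: int_induct[where k=0])
  case base then show ?case using assms(2) by (simp add: zpow_def[symmetric] fun_eq_iff)
next
  case (step1 i)
  have "zpow UNIV f (i + 1) = (\<lambda>x. f (zpow UNIV f i x))" using zpow_succ[OF assms(1)] by auto
  then show ?case using assms(3)[OF step1(2)] by simp
next
  case (step2 i)
  have "zpow UNIV f (i - 1) = (\<lambda>x. inv f (zpow UNIV f i x))" using zpow_pred[OF assms(1)] by auto
  then show ?case using assms(4)[OF step2(2)] by simp
qed


lemma inv_lin: assumes "lin (UNIV, s) (UNIV, s) f" "bij f" shows "lin (UNIV, s) (UNIV, s) (inv f)"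
proof -
  have a: "inv f (x + y) = inv f x + inv f y" for x y
  proof -
    have "f (inv f x + inv f y) = x + y" using linD(2)[OF assms(1)] assms(2) by (simp add: bij_is_surj[THEN surj_f_inv_f])
    then show ?thesis using assms(2) by (metis bij_inv_eq_iff)
  qed
  have b: "inv f (s c x) = s c (inv f x)" for c x
  proof -
    have "f (s c (inv f x)) = s c x" using linD(3)[OF assms(1)] assms(2) by (simp add: bij_is_surj[THEN surj_f_inv_f])
    then show ?thesis using assms(2) by (metis bij_inv_eq_iff)
  qed
  show ?thesis unfolding lin_def using a b by simp
qed

lemma lin_zpow: assumes "lin (UNIV, s) (UNIV, s) f" "bij f" shows "lin (UNIV, s) (UNIV, s) (zpow UNIV f n)"
proof (rule zpow_induct[OF assms(2)])
  show "lin (UNIV, s) (UNIV, s) (\<lambda>x. x)" unfolding lin_def by simp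
next
  fix g assume "lin (UNIV, s) (UNIV, s) g" then show "lin (UNIV, s) (UNIV, s) (\<lambda>x. f (g x))"
    using lin_comp assms(1) by blast
next
  fix g assume "lin (UNIV, s) (UNIV, s) g" then show "lin (UNIV, s) (UNIV, s) (\<lambda>x. inv f (g x))"
    using lin_comp inv_lin[OF assms] by blast
qed

lemma zpow_mult: assumes "bij f" "\<And>a b. f (mu a b) = mu (f a) (f b)"
  shows "zpow UNIV f n (mu a b) = mu (zpow UNIV f n a) (zpow UNIV f n b)"
proof -
  have i: "inv f (mu a b) = mu (inv f a) (inv f b)" for a b
    using assms by (metis bij_inv_eq_iff)
  have "\<forall>a b. zpow UNIV f n (mu a b) = mu (zpow UNIV f n a) (zpow UNIV f n b)"
    by (rule zpow_induct[OF assms(1), where P="\<lambda>g. \<forall>a b. g (mu a b) = mu (g a) (g b)"]) (auto simp: assms(2) i)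
  then show ?thesis by blast
qed

lemma zpow_fix: assumes "bij f" "f u = u" shows "zpow UNIV f n u = u"
proof -
  have i: "inv f u = u" using assms by (metis bij_inv_eq_iff)
  show ?thesis
    by (rule zpow_induct[OF assms(1), where P="\<lambda>g. g u = u"]) (auto simp: assms(2) i)
qed

lemma zpow_inv_comm: assumes "bij f" "\<And>x. g (f x) = f (g x)"
  shows "g (zpow UNIV f n x) = zpow UNIV f n (g x)"
proof -
  have i: "g (inv f x) = inv f (g x)" for x using assms by (metis bij_inv_eq_iff)
  have "\<forall>x. g (zpow UNIV f n x) = zpow UNIV f n (g x)"
    by (rule zpow_induct[OF assms(1), where P="\<lambda>h. \<forall>x. g (h x) = h (g x)"]) (auto simp: assms(2) i)
  then show ?thesis by blast
qed

lemma zpow_inv_const: assumes "bij f" "\<And>x. e (f x) = e x"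
  shows "e (zpow UNIV f n x) = e x"
proof -
  have i: "e (inv f x) = e x" for x using assms by (metis bij_inv_eq_iff)
  have "\<forall>x. e (zpow UNIV f n x) = e x"
    by (rule zpow_induct[OF assms(1), where P="\<lambda>h. \<forall>x. e (h x) = e x"]) (auto simp: assms(2) i)
  then show ?thesis by blast
qed

section \<open>The antipode of the crossed product\<close>

named_theorems lin_intros "linearity and membership side conditions of Sweedler sum manipulations"

locale crossed_product_hopf =
  fixes sA :: "'k::field \<Rightarrow> 'a::ab_group_add \<Rightarrow> 'a"
    and sH :: "'k \<Rightarrow> 'h::ab_group_add \<Rightarrow> 'h"
    and m k :: int
    and muH :: "'h \<Rightarrow> 'h \<Rightarrow> 'h" and uH :: 'h and DH :: "'h \<Rightarrow> ('k, 'h, 'h) tensor"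
    and eH :: "'h \<Rightarrow> 'k" and al :: "'h \<Rightarrow> 'h"
    and muA :: "'a \<Rightarrow> 'a \<Rightarrow> 'a" and uA :: 'a and DA :: "'a \<Rightarrow> ('k, 'a, 'a) tensor"
    and eA :: "'a \<Rightarrow> 'k" and be :: "'a \<Rightarrow> 'a"
    and act :: "'h \<Rightarrow> 'a \<Rightarrow> 'a" and rho :: "'a \<Rightarrow> ('k, 'h, 'a) tensor"
    and sig :: "'h \<Rightarrow> 'h \<Rightarrow> 'a"
    and SH' :: "'h \<Rightarrow> 'h" and SA' :: "'a \<Rightarrow> 'a"
  assumes H_bialg: "hom_bialgebra (UNIV :: 'h set, sH) muH uH DH eH al"
    and A_alg: "hom_algebra (UNIV :: 'a set, sA) muA uA be"
    and A_mod: "weak_hom_module_algebra (UNIV :: 'h set, sH) DH eH (UNIV :: 'a set, sA) muA uA act"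
    and A_comod: "hom_comodule_coalgebra (UNIV :: 'h set, sH) muH uH DH eH al (UNIV :: 'a set, sA) DA eA be rho"
    and sig_lin: "bilin (UNIV :: 'h set, sH) (UNIV :: 'h set, sH) (UNIV :: 'a set, sA) sig"
    and cp_bialg: "hom_bialgebra (tspace (UNIV :: 'a set, sA) (UNIV :: 'h set, sH))
                     (cp_mult (UNIV :: 'a set, sA) (UNIV :: 'h set, sH) muA muH DH act sig al be m k) (cp_unit (UNIV :: 'a set, sA) (UNIV :: 'h set, sH) uA uH)
                     (cp_comult (UNIV :: 'a set, sA) (UNIV :: 'h set, sH) DA rho muH DH al be m) (cp_counit (UNIV :: 'a set, sA) (UNIV :: 'h set, sH) eA eH)
                     (cp_struct (UNIV :: 'a set, sA) (UNIV :: 'h set, sH) be al)"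
    and SH_anti: "sigma_antipode (UNIV :: 'h set, sH) muH uH DH eH al (UNIV :: 'a set, sA) uA sig SH'"
    and SA_lin: "lin (UNIV :: 'a set, sA) (UNIV :: 'a set, sA) SA'"
    and SA_comm: "\<forall>a. be (SA' a) = SA' (be a)"
    and SA_conv: "\<forall>a. lift2 (UNIV :: 'a set, sA) (UNIV :: 'a set, sA) (\<lambda>a1 a2. muA (SA' a1) a2) (DA a) = sA (eA a) uA
                   \<and> lift2 (UNIV :: 'a set, sA) (UNIV :: 'a set, sA) (\<lambda>a1 a2. muA a1 (SA' a2)) (DA a) = sA (eA a) uA"
begin

abbreviation "SA \<equiv> (UNIV :: 'a set, sA)"
abbreviation "SH \<equiv> (UNIV :: 'h set, sH)"
abbreviation "AH \<equiv> tspace SA SH"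
abbreviation "cmult \<equiv> cp_mult SA SH muA muH DH act sig al be m k"
abbreviation "cunit \<equiv> cp_unit SA SH uA uH"
abbreviation "ccomult \<equiv> cp_comult SA SH DA rho muH DH al be m"
abbreviation "ccounit \<equiv> cp_counit SA SH eA eH"
abbreviation "cstruct \<equiv> cp_struct SA SH be al"
abbreviation "cantipode \<equiv> cp_antipode SA SH muA uA muH uH DH act sig al be rho SH' SA' m k"
abbreviation "alz n \<equiv> zpow (UNIV :: 'h set) al n"
abbreviation "bez n \<equiv> zpow (UNIV :: 'a set) be n"
abbreviation "tAH \<equiv> tens SA SH"
abbreviation "tHH \<equiv> tens SH SH"

lemma vsH: "vs SH"
  and bilin_muH: "bilin SH SH SH muH"
  and lin_al: "lin SH SH al"
  and bij_al: "bij al"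
  and muH_hom_assoc: "\<And>a b c. muH (al a) (muH b c) = muH (muH a b) (al c)"
  and al_muH: "\<And>a b. al (muH a b) = muH (al a) (al b)"
  and muH_unit_left: "\<And>a. muH uH a = al a"
  and al_unit: "al uH = uH"
  and lin_DH: "lin SH (tspace SH SH) DH"
  and lin_eH: "lin SH Kspace eH"
  and DH_al: "\<And>c. DH (al c) = lift2 SH SH (\<lambda>x y. tens SH SH (al x) (al y)) (DH c)"
  and DH_counit_left: "\<And>c. lift2 SH SH (\<lambda>x y. sH (eH x) y) (DH c) = inv al c"
  and eH_al: "\<And>c. eH (al c) = eH c"
  and DH_muH: "\<And>x y. DH (muH x y) =
    lift2 SH SH (\<lambda>x1 x2. lift2 SH SH (\<lambda>y1 y2. tens SH SH (muH x1 y1) (muH x2 y2)) (DH y)) (DH x)"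
  and eH_muH: "\<And>x y. eH (muH x y) = eH x * eH y"
  using H_bialg unfolding hom_bialgebra_def hom_algebra_def hom_coalgebra_def
  by (auto simp: bij_betw_def bij_def)

lemma vsA: "vs SA"
  and bilin_muA: "bilin SA SA SA muA"
  and lin_be: "lin SA SA be"
  and bij_be: "bij be"
  and muA_unit_right: "\<And>a. muA a uA = be a"
  and muA_unit_left: "\<And>a. muA uA a = be a"
  and be_unit: "be uA = uA"
  using A_alg unfolding hom_algebra_def by (auto simp: bij_betw_def bij_def)

lemma bilin_act: "bilin SH SA SA act"
  and act_unit: "\<And>p. act p uA = sA (eH p) uA"
  using A_mod unfolding weak_hom_module_algebra_def by auto

lemma lin_DA: "lin SA (tspace SA SA) DA"
  and lin_eA: "lin SA Kspace eA"
  and lin_rho: "lin SA (tspace SH SA) rho"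
  and rho_coassoc: "\<And>x. lift2 SH SA (\<lambda>y z. lift2 SH SH (\<lambda>y1 y2. tens3 SH SH SA y1 y2 (inv be z)) (DH y)) (rho x)
      = lift2 SH SA (\<lambda>y z. lift2 SH SA (\<lambda>z1 z2. tens3 SH SH SA (inv al y) z1 z2) (rho z)) (rho x)"
  and rho_be: "\<And>x. rho (be x) = lift2 SH SA (\<lambda>y z. tens SH SA (al y) (be z)) (rho x)"
  and rho_counit: "\<And>x. lift2 SH SA (\<lambda>y z. sA (eH y) z) (rho x) = inv be x"
  and rho_DA: "\<And>b. lift2 SH SA (\<lambda>y z. lift2 SA SA (\<lambda>z1 z2. tens3 SH SA SA y z1 z2) (DA z)) (rho b)
      = lift2 SA SA (\<lambda>b1 b2. lift2 SH SA (\<lambda>y1 z1. lift2 SH SA (\<lambda>y2 z2.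
            tens3 SH SA SA (muH y1 y2) z1 z2) (rho b2)) (rho b1)) (DA b)"
  and rho_eA: "\<And>b. lift2 SH SA (\<lambda>y z. sH (eA z) y) (rho b) = sH (eA b) uH"
  using A_comod unfolding hom_comodule_coalgebra_def hom_coalgebra_def hom_comodule_def by auto

lemma bilin_cmult: "bilin AH AH AH cmult"
  and lin_cstruct: "lin AH AH cstruct"
  and cmult_hom_assoc: "\<And>a b c. a \<in> fst AH \<Longrightarrow> b \<in> fst AH \<Longrightarrow> c \<in> fst AH \<Longrightarrow>
    cmult (cstruct a) (cmult b c) = cmult (cmult a b) (cstruct c)"
  and cstruct_cmult: "\<And>a b. a \<in> fst AH \<Longrightarrow> b \<in> fst AH \<Longrightarrow> cstruct (cmult a b) = cmult (cstruct a) (cstruct b)"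
  and cmult_cunit_left: "\<And>a. a \<in> fst AH \<Longrightarrow> cmult cunit a = cstruct a"
  and lin_ccomult: "lin AH (tspace AH AH) ccomult"
  and lin_ccounit: "lin AH Kspace ccounit"
  using cp_bialg unfolding hom_bialgebra_def hom_algebra_def hom_coalgebra_def by auto

lemma lin_SH': "lin SH SH SH'"
  and al_SH': "\<And>h. al (SH' h) = SH' (al h)"
  and sigma_antipode_id_S: "\<And>h. lift2 SH SH (\<lambda>x y. lift2 SH SH (\<lambda>x1 x2. lift2 SH SH (\<lambda>y1 y2.
            tens SA SH (sig x1 y1) (muH x2 y2)) (DH (SH' y))) (DH x)) (DH h)
        = tens SA SH (sA (eH h) uA) uH"
  and sigma_antipode_S_id: "\<And>h. lift2 SH SH (\<lambda>x y. lift2 SH SH (\<lambda>x1 x2. lift2 SH SH (\<lambda>y1 y2.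
            tens SA SH (sig x1 y1) (muH x2 y2)) (DH y)) (DH (SH' x))) (DH h)
        = tens SA SH (sA (eH h) uA) uH"
  using SH_anti unfolding sigma_antipode_def by auto

lemma memA[lin_intros]: "x \<in> fst SA" and memH[lin_intros]: "y \<in> fst SH" and memK[lin_intros]: "c \<in> fst Kspace"
  by auto

lemma sepA[lin_intros]: "separating SA" and sepH[lin_intros]: "separating SH"
  using separating_full vsA vsH by blast+

lemma vsAH: "vs AH" and sepAH: "separating AH" and sepAHAH: "separating (tspace AH AH)"
  by (intro vs_tspace separating_tspace vsA)+

declare vsA[lin_intros] vsH[lin_intros] vs_tspace[lin_intros] separating_tspace[lin_intros]
  separating_Kspace[lin_intros] lift2_mem[lin_intros] lin_lift2_comp[lin_intros] lin_lift2_param[lin_intros]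
  bilinI[lin_intros] trilinI[lin_intros] lin_id[lin_intros]

lemma memDH[lin_intros]: "DH h \<in> fst (tspace SH SH)" using linD(1)[OF lin_DH] by simp
lemma memDA[lin_intros]: "DA a \<in> fst (tspace SA SA)" using linD(1)[OF lin_DA] by simp
lemma memrho[lin_intros]: "rho a \<in> fst (tspace SH SA)" using linD(1)[OF lin_rho] by simp
lemma memtens[lin_intros]: "tAH a h \<in> fst AH" by (rule tens_mem) auto

lemma lin_alz: "lin SH SH (alz n)" using lin_zpow[OF lin_al bij_al] .
lemma lin_bez: "lin SA SA (bez n)" using lin_zpow[OF lin_be bij_be] .
lemma lin_inv_be: "lin SA SA (inv be)" using inv_lin[OF lin_be bij_be] .
lemma lin_inv_al: "lin SH SH (inv al)" using inv_lin[OF lin_al bij_al] .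
lemma lin_comp_inv_be[lin_intros]: "lin R SA f \<Longrightarrow> lin R SA (\<lambda>x. inv be (f x))" using lin_comp[OF _ lin_inv_be] by blast

lemma lin_scaleA: "lin Kspace SA (\<lambda>c. sA c a)" "lin SA SA (sA c)"
  unfolding lin_def using vsD[OF vsA] by (simp_all add: mult.commute)
lemma lin_scaleH: "lin Kspace SH (\<lambda>c. sH c a)" "lin SH SH (sH c)"
  unfolding lin_def using vsD[OF vsH] by (simp_all add: mult.commute)

lemma lin_comp_muA1[lin_intros]: "lin R SA fA \<Longrightarrow> lin R SA (\<lambda>x. muA (fA x) a)"
  by (rule lin_comp_bilin1[OF bilin_muA _ memA])
lemma lin_comp_muA2[lin_intros]: "lin R SA fA \<Longrightarrow> lin R SA (\<lambda>x. muA a (fA x))"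
  by (rule lin_comp_bilin2[OF bilin_muA memA])
lemma lin_comp_muH1[lin_intros]: "lin R SH fH \<Longrightarrow> lin R SH (\<lambda>x. muH (fH x) p)"
  by (rule lin_comp_bilin1[OF bilin_muH _ memH])
lemma lin_comp_muH2[lin_intros]: "lin R SH fH \<Longrightarrow> lin R SH (\<lambda>x. muH p (fH x))"
  by (rule lin_comp_bilin2[OF bilin_muH memH])
lemma lin_comp_act1[lin_intros]: "lin R SH fH \<Longrightarrow> lin R SA (\<lambda>x. act (fH x) a)"
  by (rule lin_comp_bilin1[OF bilin_act _ memA])
lemma lin_comp_act2[lin_intros]: "lin R SA fA \<Longrightarrow> lin R SA (\<lambda>x. act p (fA x))"
  by (rule lin_comp_bilin2[OF bilin_act memH])
lemma lin_comp_sig1[lin_intros]: "lin R SH fH \<Longrightarrow> lin R SA (\<lambda>x. sig (fH x) p)"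
  by (rule lin_comp_bilin1[OF sig_lin _ memH])
lemma lin_comp_sig2[lin_intros]: "lin R SH fH \<Longrightarrow> lin R SA (\<lambda>x. sig p (fH x))"
  by (rule lin_comp_bilin2[OF sig_lin memH])
lemma lin_comp_cmult1[lin_intros]: "lin R AH fT \<Longrightarrow> t \<in> fst AH \<Longrightarrow> lin R AH (\<lambda>x. cmult (fT x) t)"
  by (rule lin_comp_bilin1[OF bilin_cmult])
lemma lin_comp_cmult2[lin_intros]: "lin R AH fT \<Longrightarrow> t \<in> fst AH \<Longrightarrow> lin R AH (\<lambda>x. cmult t (fT x))"
  by (rule lin_comp_bilin2[OF bilin_cmult])
lemma lin_comp_tens1[lin_intros]: "vs S \<Longrightarrow> lin R S g \<Longrightarrow> y \<in> fst T \<Longrightarrow> lin R (tspace S T) (\<lambda>x. tens S T (g x) y)"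
  by (rule lin_comp[OF _ lin_tens1])
lemma lin_comp_tens2[lin_intros]: "vs T \<Longrightarrow> lin R T g \<Longrightarrow> y \<in> fst S \<Longrightarrow> lin R (tspace S T) (\<lambda>x. tens S T y (g x))"
  by (rule lin_comp[OF _ lin_tens2])
lemma lin_comp_al[lin_intros]: "lin R SH fH \<Longrightarrow> lin R SH (\<lambda>x. al (fH x))"
  by (rule lin_comp[OF _ lin_al])
lemma lin_comp_be[lin_intros]: "lin R SA fA \<Longrightarrow> lin R SA (\<lambda>x. be (fA x))"
  by (rule lin_comp[OF _ lin_be])
lemma lin_comp_alz[lin_intros]: "lin R SH fH \<Longrightarrow> lin R SH (\<lambda>x. alz n (fH x))"
  by (rule lin_comp[OF _ lin_alz])
lemma lin_comp_bez[lin_intros]: "lin R SA fA \<Longrightarrow> lin R SA (\<lambda>x. bez n (fA x))"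
  by (rule lin_comp[OF _ lin_bez])
lemma lin_comp_SH'[lin_intros]: "lin R SH fH \<Longrightarrow> lin R SH (\<lambda>x. SH' (fH x))"
  by (rule lin_comp[OF _ lin_SH'])
lemma lin_comp_SA'[lin_intros]: "lin R SA fA \<Longrightarrow> lin R SA (\<lambda>x. SA' (fA x))"
  by (rule lin_comp[OF _ SA_lin])
lemma lin_comp_eH[lin_intros]: "lin R SH fH \<Longrightarrow> lin R Kspace (\<lambda>x. eH (fH x))"
  by (rule lin_comp[OF _ lin_eH])
lemma lin_comp_eA[lin_intros]: "lin R SA fA \<Longrightarrow> lin R Kspace (\<lambda>x. eA (fA x))"
  by (rule lin_comp[OF _ lin_eA])
lemma lin_comp_DH[lin_intros]: "lin R SH fH \<Longrightarrow> lin R (tspace SH SH) (\<lambda>x. DH (fH x))"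
  by (rule lin_comp[OF _ lin_DH])
lemma lin_comp_DA[lin_intros]: "lin R SA fA \<Longrightarrow> lin R (tspace SA SA) (\<lambda>x. DA (fA x))"
  by (rule lin_comp[OF _ lin_DA])
lemma lin_comp_rho[lin_intros]: "lin R SA fA \<Longrightarrow> lin R (tspace SH SA) (\<lambda>x. rho (fA x))"
  by (rule lin_comp[OF _ lin_rho])
lemma lin_comp_cstruct[lin_intros]: "lin R AH fT \<Longrightarrow> lin R AH (\<lambda>x. cstruct (fT x))"
  by (rule lin_comp[OF _ lin_cstruct])
lemma lin_comp_sA1[lin_intros]: "lin R Kspace fK \<Longrightarrow> lin R SA (\<lambda>x. sA (fK x) a)"
  by (rule lin_comp[OF _ lin_scaleA(1)])
lemma lin_comp_sA2[lin_intros]: "lin R SA fA \<Longrightarrow> lin R SA (\<lambda>x. sA c (fA x))"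
  by (rule lin_comp[OF _ lin_scaleA(2)])
lemma lin_comp_sH1[lin_intros]: "lin R Kspace fK \<Longrightarrow> lin R SH (\<lambda>x. sH (fK x) p)"
  by (rule lin_comp[OF _ lin_scaleH(1)])
lemma lin_comp_sH2[lin_intros]: "lin R SH fH \<Longrightarrow> lin R SH (\<lambda>x. sH c (fH x))"
  by (rule lin_comp[OF _ lin_scaleH(2)])

lemma lin_comp_Kmul1[lin_intros]: "lin R Kspace fK \<Longrightarrow> lin R Kspace (\<lambda>x. fK x * c)"
  and lin_comp_Kmul2[lin_intros]: "lin R Kspace fK \<Longrightarrow> lin R Kspace (\<lambda>x. c * fK x)"
  unfolding lin_def by (simp_all add: algebra_simps)

lemma cstruct_tens: "cstruct (tAH a h) = tAH (be a) (al h)"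
  unfolding cp_struct_def by (rule lift2_tens[OF sepAH _ memA memH]) (intro lin_intros ballI)

lemma ccounit_tens: "ccounit (tAH a h) = eA a * eH h"
  unfolding cp_counit_def by (rule lift2_tens[OF separating_Kspace _ memA memH]) (intro lin_intros ballI)

lemma cmult_tens: "cmult (tAH a h) (tAH b g) =
  lift2 SH SH (\<lambda>x h2. lift2 SH SH (\<lambda>h11 h12. lift2 SH SH (\<lambda>g1 g2.
         tAH (muA a (muA (act (alz m h11) (bez (-2) b)) (sig (alz (k + 1) h12) (alz k g1))))
           (al (muH h2 g2))) (DH g)) (DH x)) (DH h)"
  unfolding cp_mult_def fst_conv
  apply (subst lift2_tens[OF sepAH _ memA memH])
   apply (intro lin_intros ballI)
  apply (subst lift2_tens[OF sepAH _ memA memH])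
   apply (intro lin_intros ballI)
  apply (rule refl)
  done

lemma cantipode_tens: "cantipode (tAH a h) = lift2 SH SA (\<lambda>y z. cmult (tAH uA (SH' (muH (alz (m - 1) y) (alz (-2) h)))) (tAH (SA' z) uH)) (rho a)"
  unfolding cp_antipode_def fst_conv
  by (rule lift2_tens[OF sepAH _ memA memH]) (intro lin_intros ballI)

lemma ccomult_tens: "ccomult (tAH a h) = lift2 SA SA (\<lambda>a1 a2. lift2 SH SA (\<lambda>y z. lift2 SH SH (\<lambda>h1 h2.
        tens AH AH (tAH a1 (muH (alz m y) (alz (-1) h1))) (tAH (be z) h2)) (DH h)) (rho a2)) (DA a)"
  unfolding cp_comult_def fst_conv
  by (rule lift2_tens[OF sepAHAH _ memA memH]) (intro lin_intros ballI)

lemma lin_cantipode: "lin AH AH cantipode"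
  unfolding cp_antipode_def fst_conv by (intro lin_intros ballI)

lemma lin_comp_cantipode[lin_intros]: "lin R AH f \<Longrightarrow> lin R AH (\<lambda>x. cantipode (f x))"
  using lin_comp[OF _ lin_cantipode] by blast

lemma mem_cantipode[lin_intros]: "a \<in> fst AH \<Longrightarrow> cantipode a \<in> fst AH" using linD(1)[OF lin_cantipode] by blast

lemma lin_tscale: "lin AH AH (tscale c)"
  unfolding lin_def tspace_simps(2) using vsD(3)[OF vsAH] by (simp add: tspace_simps(2) tscale_simps mult.commute)

lemma lin_comp_tscale[lin_intros]: "lin R AH f \<Longrightarrow> lin R AH (\<lambda>x. tscale c (f x))"
  using lin_comp[OF _ lin_tscale] by blast

lemma memtscale[lin_intros]: "a \<in> fst AH \<Longrightarrow> tscale c a \<in> fst AH" using linD(1)[OF lin_tscale] by blast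

lemma scale_simps:
  "muA (sA c x) y = sA c (muA x y)" "muA x (sA c y) = sA c (muA x y)"
  "be (sA c x) = sA c (be x)" "SA' (sA c x) = sA c (SA' x)" "bez n (sA c x) = sA c (bez n x)"
  "act (sH c p) x = sA c (act p x)" "act p (sA c x) = sA c (act p x)"
  "sig (sH c p) q = sA c (sig p q)" "sig p (sH c q) = sA c (sig p q)"
  "muH (sH c p) q = sH c (muH p q)" "muH p (sH c q) = sH c (muH p q)"
  "al (sH c p) = sH c (al p)" "alz n (sH c p) = sH c (alz n p)" "SH' (sH c p) = sH c (SH' p)"
  "eH (sH c p) = c * eH p" "eA (sA c x) = c * eA x"
  "tAH (sA c x) p = tscale c (tAH x p)" "tAH x (sH c p) = tscale c (tAH x p)"
  "sA c (sA d x) = sA (c * d) x" "sA 1 x = x" "sH c (sH d p) = sH (c * d) p" "sH 1 p = p"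
proof -
  show "muA (sA c x) y = sA c (muA x y)" using linD(3)[OF bilinD(2)[OF bilin_muA]] by simp
  show "muA x (sA c y) = sA c (muA x y)" using linD(3)[OF bilinD(1)[OF bilin_muA]] by simp
  show "be (sA c x) = sA c (be x)" using linD(3)[OF lin_be] by simp
  show "SA' (sA c x) = sA c (SA' x)" using linD(3)[OF SA_lin] by simp
  show "bez n (sA c x) = sA c (bez n x)" using linD(3)[OF lin_bez] by simp
  show "act (sH c p) x = sA c (act p x)" using linD(3)[OF bilinD(2)[OF bilin_act]] by simp
  show "act p (sA c x) = sA c (act p x)" using linD(3)[OF bilinD(1)[OF bilin_act]] by simp
  show "sig (sH c p) q = sA c (sig p q)" using linD(3)[OF bilinD(2)[OF sig_lin]] by simp
  show "sig p (sH c q) = sA c (sig p q)" using linD(3)[OF bilinD(1)[OF sig_lin]] by simp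
  show "muH (sH c p) q = sH c (muH p q)" using linD(3)[OF bilinD(2)[OF bilin_muH]] by simp
  show "muH p (sH c q) = sH c (muH p q)" using linD(3)[OF bilinD(1)[OF bilin_muH]] by simp
  show "al (sH c p) = sH c (al p)" using linD(3)[OF lin_al] by simp
  show "alz n (sH c p) = sH c (alz n p)" using linD(3)[OF lin_alz] by simp
  show "SH' (sH c p) = sH c (SH' p)" using linD(3)[OF lin_SH'] by simp
  show "eH (sH c p) = c * eH p" using linD(3)[OF lin_eH] by simp
  show "eA (sA c x) = c * eA x" using linD(3)[OF lin_eA] by simp
  show "tAH (sA c x) p = tscale c (tAH x p)" using tens_scale1[OF vsA memA memH] by simp
  show "tAH x (sH c p) = tscale c (tAH x p)" using tens_scale2[OF vsH memA memH] by simp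
  show "sA c (sA d x) = sA (c * d) x" using vsD(6)[OF vsA] by simp
  show "sA 1 x = x" using vsD(7)[OF vsA] by simp
  show "sH c (sH d p) = sH (c * d) p" using vsD(6)[OF vsH] by simp
  show "sH 1 p = p" using vsD(7)[OF vsH] by simp
qed

lemma cmult_tscale: "a \<in> fst AH \<Longrightarrow> b \<in> fst AH \<Longrightarrow> cmult (tscale c a) b = tscale c (cmult a b)"
  "a \<in> fst AH \<Longrightarrow> b \<in> fst AH \<Longrightarrow> cmult a (tscale c b) = tscale c (cmult a b)"
  using linD(3)[OF bilinD(2)[OF bilin_cmult]] linD(3)[OF bilinD(1)[OF bilin_cmult]] by (auto simp: tspace_simps(2))

lemma zpow_simps:
  "alz 0 x = x" "alz (a + b) x = alz a (alz b x)" "alz 1 x = al x" "alz (-1) x = inv al x"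
  "bez 0 y = y" "bez (a + b) y = bez a (bez b y)" "bez 1 y = be y" "bez (-1) y = inv be y"
  using zpow_add[OF bij_al] zpow_1[OF bij_al] zpow_m1[OF bij_al]
    zpow_add[OF bij_be] zpow_1[OF bij_be] zpow_m1[OF bij_be] by auto

lemma inv_simps: "al (inv al x) = x" "inv al (al x) = x" "be (inv be y) = y" "inv be (be y) = y"
  using bij_al bij_be by (auto simp: bij_is_surj[THEN surj_f_inv_f] bij_is_inj[THEN inv_f_f])

lemma alz_mult: "alz n (muH a b) = muH (alz n a) (alz n b)"
  by (rule zpow_mult[OF bij_al]) (use al_muH in auto)
lemma alz_unit: "alz n uH = uH" by (rule zpow_fix[OF bij_al al_unit])
lemma bez_unit: "bez n uA = uA" by (rule zpow_fix[OF bij_be be_unit])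
lemma eH_alz: "eH (alz n x) = eH x" by (rule zpow_inv_const[OF bij_al]) (use eH_al in auto)
lemma SH'_alz: "SH' (alz n x) = alz n (SH' x)" by (rule zpow_inv_comm[OF bij_al]) (use al_SH' in auto)
lemma al_alz: "al (alz n x) = alz (n + 1) x" using zpow_simps by (metis add.commute)
lemma alz_al: "alz n (al x) = alz (n + 1) x" using zpow_simps by metis
lemma alz_alz: "alz a (alz b x) = alz (a + b) x" using zpow_simps(2) by simp
lemma alz_muH: "muH (alz n a) (alz n b) = alz n (muH a b)" using alz_mult by simp
lemma alz_inv: "alz (n + 1) (inv al x) = alz n x"
  using zpow_simps(2)[of "n + 1" "-1" x] zpow_simps(4)[of x] by simp



lemma mapA_comp: assumes "lin SA SA f" "lin SA SA f'" "t \<in> fst AH"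
  shows "lift2 SA SH (\<lambda>p q. tAH (f p) q) (lift2 SA SH (\<lambda>p q. tAH (f' p) q) t) = lift2 SA SH (\<lambda>p q. tAH (f (f' p)) q) t"
  by (rule lift2_lift2_tens[OF vsA vsA vsH sepAH _ _ _ assms(3)]) (intro lin_intros ballI conjI assms)+


text \<open>This is read off from the unit axiom \<open>(1 \<otimes> 1)(c \<otimes> g) = \<beta>(c) \<otimes> \<alpha>(g)\<close> of the crossed
  product rather than computed from the multiplication formula.\<close>

lemma cmult_tens_unitH: "cmult (tAH b uH) (tAH c g) = tAH (muA b c) (al g)"
proof -
  define Q where "Q = lift2 SH SH (\<lambda>x h2. lift2 SH SH (\<lambda>h11 h12. lift2 SH SH (\<lambda>g1 g2.
         tAH (muA (act (alz m h11) (bez (-2) c)) (sig (alz (k + 1) h12) (alz k g1)))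
           (al (muH h2 g2))) (DH g)) (DH x)) (DH uH)"
  have QAH: "Q \<in> fst AH" unfolding Q_def by (intro lin_intros ballI)
  have push: "lift2 SA SH (\<lambda>p q. tAH (muA b' p) q) Q = cmult (tAH b' uH) (tAH c g)" for b'
    unfolding Q_def cmult_tens
    apply (intro lift2_comm_cong[where \<phi>="lift2 SA SH (\<lambda>p q. tAH (muA b' p) q)" and U=AH and V=AH] lin_intros ballI)
    apply (subst lift2_tens[OF sepAH _ memA memH])
     apply (intro lin_intros ballI)
    apply (rule refl)
    done
  have "lift2 SA SH (\<lambda>p q. tAH (be p) q) Q = tAH (be c) (al g)"
    using push[of uA] cmult_cunit_left[OF memtens] cstruct_tens unfolding cp_unit_def muA_unit_left by simp
  then have "lift2 SA SH (\<lambda>p q. tAH (inv be p) q) (lift2 SA SH (\<lambda>p q. tAH (be p) q) Q)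
       = lift2 SA SH (\<lambda>p q. tAH (inv be p) q) (tAH (be c) (al g))" by simp
  then have "Q = tAH c (al g)"
    unfolding mapA_comp[OF lin_inv_be lin_be QAH] inv_simps lift2_id[OF vsA vsH QAH]
    by (subst (asm) lift2_tens[OF sepAH _ memA memH]) (intro lin_intros ballI | simp add: inv_simps)+
  moreover have "lift2 SA SH (\<lambda>p q. tAH (muA b p) q) (tAH c (al g)) = tAH (muA b c) (al g)"
    by (rule lift2_tens[OF sepAH _ memA memH]) (intro lin_intros ballI)
  ultimately show ?thesis using push[of b] by simp
qed

abbreviation "twisted_sigma b u v \<equiv> lift2 SH SH (\<lambda>x h2. lift2 SH SH (\<lambda>g1 g2.
     tAH (muA b (be (sig (alz k x) (alz k g1)))) (al (muH h2 g2))) (DH v)) (DH u)"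

lemma cmult_tens_unitA: "cmult (tAH b u) (tAH uA v) = twisted_sigma b u v"
  unfolding cmult_tens
proof (rule lift2_cong[OF memDH])
  fix x h2
  define \<Psi> where "\<Psi> y = lift2 SH SH (\<lambda>g1 g2. tAH (muA b (be (sig (alz (k + 1) y) (alz k g1)))) (al (muH h2 g2))) (DH v)" for y
  have lP: "lin SH AH \<Psi>" unfolding \<Psi>_def by (intro lin_intros ballI)
  have "lift2 SH SH (\<lambda>h11 h12. lift2 SH SH (\<lambda>g1 g2.
         tAH (muA b (muA (act (alz m h11) (bez (-2) uA)) (sig (alz (k + 1) h12) (alz k g1))))
           (al (muH h2 g2))) (DH v)) (DH x) = lift2 SH SH (\<lambda>h11 h12. \<Psi> (sH (eH h11) h12)) (DH x)"
    unfolding \<Psi>_def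
    by (intro lift2_cong memDH) (simp add: bez_unit act_unit eH_alz scale_simps muA_unit_left)
  also have "\<dots> = \<Psi> (lift2 SH SH (\<lambda>h11 h12. sH (eH h11) h12) (DH x))"
    by (rule lift2_comm[OF vsH sepH sepAH _ lP memDH, symmetric]) (intro lin_intros ballI)+
  also have "\<dots> = lift2 SH SH (\<lambda>g1 g2. tAH (muA b (be (sig (alz k x) (alz k g1)))) (al (muH h2 g2))) (DH v)"
    unfolding DH_counit_left \<Psi>_def alz_inv ..
  finally show "lift2 SH SH (\<lambda>h11 h12. lift2 SH SH (\<lambda>g1 g2.
         tAH (muA b (muA (act (alz m h11) (bez (-2) uA)) (sig (alz (k + 1) h12) (alz k g1))))
           (al (muH h2 g2))) (DH v)) (DH x) = lift2 SH SH (\<lambda>g1 g2. tAH (muA b (be (sig (alz k x) (alz k g1)))) (al (muH h2 g2))) (DH v)" .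
qed

lemma mapHH_comp: assumes "lin SH SH f" "lin SH SH g" "lin SH SH f'" "lin SH SH g'" "t \<in> fst (tspace SH SH)"
  shows "lift2 SH SH (\<lambda>x y. tHH (f x) (g y)) (lift2 SH SH (\<lambda>x y. tHH (f' x) (g' y)) t)
       = lift2 SH SH (\<lambda>x y. tHH (f (f' x)) (g (g' y))) t"
  by (rule lift2_lift2_tens[OF vsH vsH vsH separating_tspace[OF vsH, of SH] _ _ _ assms(5)]) (intro lin_intros ballI conjI assms)+

lemma DH_inv: "DH (inv al c) = lift2 SH SH (\<lambda>x y. tHH (inv al x) (inv al y)) (DH c)"
proof -
  have "DH c = lift2 SH SH (\<lambda>x y. tHH (al x) (al y)) (DH (inv al c))"
    using DH_al[of "inv al c"] inv_simps by simp
  then have "lift2 SH SH (\<lambda>x y. tHH (inv al x) (inv al y)) (DH c) = lift2 SH SH (\<lambda>x y. tHH (inv al (al x)) (inv al (al y))) (DH (inv al c))"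
    using mapHH_comp[OF lin_inv_al lin_inv_al lin_al lin_al memDH] by simp
  also have "\<dots> = DH (inv al c)" unfolding inv_simps by (rule lift2_id[OF vsH vsH memDH])
  finally show ?thesis by simp
qed

lemma DH_alz: "DH (alz n c) = lift2 SH SH (\<lambda>x y. tHH (alz n x) (alz n y)) (DH c)"
proof -
  have "lin SH SH (alz n) \<and> (\<forall>c. DH (alz n c) = lift2 SH SH (\<lambda>x y. tHH (alz n x) (alz n y)) (DH c))"
  proof (rule zpow_induct[OF bij_al, where P="\<lambda>g. lin SH SH g \<and> (\<forall>c. DH (g c) = lift2 SH SH (\<lambda>x y. tHH (g x) (g y)) (DH c))"])
    show "lin SH SH (\<lambda>x. x) \<and> (\<forall>c. DH c = lift2 SH SH (\<lambda>x y. tHH x y) (DH c))"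
      using lift2_id[OF vsH vsH memDH] lin_id by simp
  next
    fix g assume a: "lin SH SH g \<and> (\<forall>c. DH (g c) = lift2 SH SH (\<lambda>x y. tHH (g x) (g y)) (DH c))"
    have l: "lin SH SH (\<lambda>x. al (g x))" using a lin_comp lin_al by blast
    show "lin SH SH (\<lambda>x. al (g x)) \<and> (\<forall>c. DH (al (g c)) = lift2 SH SH (\<lambda>x y. tHH (al (g x)) (al (g y))) (DH c))"
      using l a DH_al mapHH_comp[OF lin_al lin_al _ _ memDH] by simp
  next
    fix g assume a: "lin SH SH g \<and> (\<forall>c. DH (g c) = lift2 SH SH (\<lambda>x y. tHH (g x) (g y)) (DH c))"
    have l: "lin SH SH (\<lambda>x. inv al (g x))" using a lin_comp lin_inv_al by blast
    show "lin SH SH (\<lambda>x. inv al (g x)) \<and> (\<forall>c. DH (inv al (g c)) = lift2 SH SH (\<lambda>x y. tHH (inv al (g x)) (inv al (g y))) (DH c))"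
      using l a DH_inv mapHH_comp[OF lin_inv_al lin_inv_al _ _ memDH] by simp
  qed
  then show ?thesis by blast
qed

lemma lift2_DH_alz: assumes "separating U" "bilin SH SH U F"
  shows "lift2 SH SH F (DH (alz n c)) = lift2 SH SH (\<lambda>x y. F (alz n x) (alz n y)) (DH c)"
  unfolding DH_alz
  by (rule lift2_lift2_tens[OF vsH vsH vsH assms(1) assms(2) _ _ memDH]) (intro lin_intros ballI conjI)+


lemma lift2_DH_alz2:
  assumes F1: "\<forall>x1\<in>fst SH. \<forall>x2\<in>fst SH. bilin SH SH AH (F x1 x2)"
    and F2: "\<forall>y1\<in>fst SH. \<forall>y2\<in>fst SH. bilin SH SH AH (\<lambda>x1 x2. F x1 x2 y1 y2)"
  shows "lift2 SH SH (\<lambda>x1 x2. lift2 SH SH (\<lambda>y1 y2. F x1 x2 y1 y2) (DH (alz n b))) (DH (alz n a))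
       = lift2 SH SH (\<lambda>x1 x2. lift2 SH SH (\<lambda>y1 y2. F (alz n x1) (alz n x2) (alz n y1) (alz n y2)) (DH b)) (DH a)"
proof -
  have B: "bilin SH SH AH (\<lambda>x1 x2. lift2 SH SH (\<lambda>y1 y2. F x1 x2 y1 y2) (DH (alz n b)))"
    by (rule bilin_lift2_param[OF vsH vsH sepAH memDH F1]) (use F2 in simp)
  have "lift2 SH SH (\<lambda>x1 x2. lift2 SH SH (\<lambda>y1 y2. F x1 x2 y1 y2) (DH (alz n b))) (DH (alz n a))
      = lift2 SH SH (\<lambda>x1 x2. lift2 SH SH (\<lambda>y1 y2. F (alz n x1) (alz n x2) y1 y2) (DH (alz n b))) (DH a)"
    by (rule lift2_DH_alz[OF sepAH B])
  also have "\<dots> = lift2 SH SH (\<lambda>x1 x2. lift2 SH SH (\<lambda>y1 y2. F (alz n x1) (alz n x2) (alz n y1) (alz n y2)) (DH b)) (DH a)"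
    by (rule lift2_cong[OF memDH], rule lift2_DH_alz[OF sepAH]) (use F1 in simp)
  finally show ?thesis .
qed

lemma lift2_DH_muH_alz:
  assumes F: "bilin SH SH AH F"
  shows "lift2 SH SH F (DH (muH (alz i Y) (alz j h)))
    = lift2 SH SH (\<lambda>Y1 Y2. lift2 SH SH (\<lambda>h1 h2. F (muH (alz i Y1) (alz j h1)) (muH (alz i Y2) (alz j h2))) (DH h)) (DH Y)"
proof -
  note lin_F = lin_comp_bilin1[OF F] lin_comp_bilin2[OF F]
  have "lift2 SH SH F (DH (muH (alz i Y) (alz j h)))
      = lift2 SH SH (\<lambda>x1 x2. lift2 SH SH (\<lambda>y1 y2. F (muH x1 y1) (muH x2 y2)) (DH (alz j h))) (DH (alz i Y))"
    unfolding DH_muH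
    by (intro lift2_comm_cong[where \<phi>="lift2 SH SH F" and U="tspace SH SH" and V=AH] lin_intros lin_F ballI
        lift2_tens[OF sepAH F])
  also have "\<dots> = lift2 SH SH (\<lambda>x1 x2. lift2 SH SH (\<lambda>y1 y2. F (muH (alz i x1) y1) (muH (alz i x2) y2)) (DH (alz j h))) (DH Y)"
    by (rule lift2_DH_alz[OF sepAH]) (intro lin_intros lin_F ballI)+
  also have "\<dots> = lift2 SH SH (\<lambda>x1 x2. lift2 SH SH (\<lambda>y1 y2. F (muH (alz i x1) (alz j y1)) (muH (alz i x2) (alz j y2))) (DH h)) (DH Y)"
    by (rule lift2_cong[OF memDH], rule lift2_DH_alz[OF sepAH]) (intro lin_intros lin_F ballI)+
  finally show ?thesis .
qed

lemma sigma_antipode_twisted: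
  assumes P: "lin SH SH P" and Q: "lin SH SH Q"
    and P_alz: "\<And>x. P (alz k x) = alz k (P x)" and Q_alz: "\<And>x. Q (alz k x) = alz k (Q x)"
    and anti: "\<And>h. lift2 SH SH (\<lambda>x y. lift2 SH SH (\<lambda>x1 x2. lift2 SH SH (\<lambda>y1 y2.
            tAH (sig x1 y1) (muH x2 y2)) (DH (Q y))) (DH (P x))) (DH h) = tAH (sA (eH h) uA) uH"
  shows "lift2 SH SH (\<lambda>x y. lift2 SH SH (\<lambda>x1 x2. lift2 SH SH (\<lambda>y1 y2.
     tAH (muA b (be (sig (alz k x1) (alz k y1)))) (al (muH x2 y2))) (DH (Q y))) (DH (P x))) (DH q)
   = tscale (eH q) (tAH (be b) uH)"
proof -
  note lin_PQ = lin_comp[OF _ P] lin_comp[OF _ Q]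
  define \<Phi> where "\<Phi> = lift2 SA SH (\<lambda>p r. tAH (muA b (be p)) (alz (1 - k) r))"
  have "lift2 SH SH (\<lambda>x y. lift2 SH SH (\<lambda>x1 x2. lift2 SH SH (\<lambda>y1 y2.
     tAH (muA b (be (sig (alz k x1) (alz k y1)))) (al (muH x2 y2))) (DH (Q y))) (DH (P x))) (DH q)
    = lift2 SH SH (\<lambda>x y. lift2 SH SH (\<lambda>x1 x2. lift2 SH SH (\<lambda>y1 y2.
            tAH (muA b (be (sig (alz k x1) (alz k y1)))) (alz (1 - k) (muH (alz k x2) (alz k y2)))) (DH (Q y))) (DH (P x))) (DH q)"
    by (intro lift2_cong memDH) (simp add: alz_muH alz_alz zpow_simps(3))
  also have "\<dots> = lift2 SH SH (\<lambda>x y. lift2 SH SH (\<lambda>x1 x2. lift2 SH SH (\<lambda>y1 y2.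
            tAH (muA b (be (sig x1 y1))) (alz (1 - k) (muH x2 y2))) (DH (Q (alz k y)))) (DH (P (alz k x)))) (DH q)"
    unfolding P_alz Q_alz by (rule lift2_cong[OF memDH], rule lift2_DH_alz2[symmetric]) (intro lin_intros lin_PQ ballI)+
  also have "\<dots> = lift2 SH SH (\<lambda>x y. lift2 SH SH (\<lambda>x1 x2. lift2 SH SH (\<lambda>y1 y2.
            tAH (muA b (be (sig x1 y1))) (alz (1 - k) (muH x2 y2))) (DH (Q y))) (DH (P x))) (DH (alz k q))"
    by (rule lift2_DH_alz[OF sepAH, symmetric]) (intro lin_intros lin_PQ ballI)+
  also have "\<dots> = \<Phi> (lift2 SH SH (\<lambda>x y. lift2 SH SH (\<lambda>x1 x2. lift2 SH SH (\<lambda>y1 y2.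
            tAH (sig x1 y1) (muH x2 y2)) (DH (Q y))) (DH (P x))) (DH (alz k q)))"
    unfolding \<Phi>_def
    by (rule sym, intro lift2_comm_cong[where \<phi>="lift2 SA SH (\<lambda>p r. tAH (muA b (be p)) (alz (1 - k) r))" and U=AH and V=AH]
        lin_intros lin_PQ ballI lift2_tens[OF sepAH _ memA memH])
  also have "\<dots> = \<Phi> (tAH (sA (eH (alz k q)) uA) uH)"
    by (simp only: anti)
  also have "\<dots> = tscale (eH q) (tAH (be b) uH)"
    unfolding \<Phi>_def
    by (subst lift2_tens[OF sepAH _ memA memH]) (intro lin_intros ballI | simp add: scale_simps eH_alz muA_unit_right be_unit alz_unit)+
  finally show ?thesis .
qed

lemma sigma_antipode_id_S_twisted: "lift2 SH SH (\<lambda>x y. lift2 SH SH (\<lambda>x1 x2. lift2 SH SH (\<lambda>y1 y2.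
     tAH (muA b (be (sig (alz k x1) (alz k y1)))) (al (muH x2 y2))) (DH (SH' y))) (DH x)) (DH q)
   = tscale (eH q) (tAH (be b) uH)"
  by (rule sigma_antipode_twisted) (simp_all add: lin_id lin_SH' SH'_alz sigma_antipode_id_S)

lemma sigma_antipode_S_id_twisted: "lift2 SH SH (\<lambda>x y. lift2 SH SH (\<lambda>x1 x2. lift2 SH SH (\<lambda>y1 y2.
     tAH (muA b (be (sig (alz k x1) (alz k y1)))) (al (muH x2 y2))) (DH y)) (DH (SH' x))) (DH q)
   = tscale (eH q) (tAH (be b) uH)"
  by (rule sigma_antipode_twisted) (simp_all add: lin_id lin_SH' SH'_alz sigma_antipode_S_id)

text \<open>The comodule coalgebra axiom and the coassociativity of the coaction are stated for the
  universal trilinear map \<open>tens3\<close>; testing against linear functionals transfers them to every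
  trilinear map into a separating space.\<close>

lemma trilin_muH_bilin:
  assumes F: "trilin SH SA SA U F"
  shows "bilin SH SA U (\<lambda>y2 z2. F (muH y1 y2) z1 z2)" and "bilin SH SA U (\<lambda>y1 z1. F (muH y1 y2) z1 z2)"
  using bilinD[OF trilinD(1)[OF F]] trilinD(2)[OF F]
  by (auto intro!: bilinI lin_comp[OF lin_comp_muH2[OF lin_id]] lin_comp[OF lin_comp_muH1[OF lin_id]])

lemma comodule_coalgebra_lhs_bilin:
  assumes U: "separating U" and F: "trilin SH SA SA U F"
  shows "bilin SH SA U (\<lambda>y z. lift2 SA SA (F y) (DA z))"
  using trilinD(2)[OF F] bilinD[OF trilinD(1)[OF F]]
  by (intro bilinI lin_lift2_comp[OF lin_DA vsA U] lin_lift2_param[OF vsH U memDA] ballI) auto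

lemma comodule_coalgebra_rhs_bilin:
  assumes U: "separating U" and F: "trilin SH SA SA U F"
  shows "bilin SH SA U (\<lambda>y1 z1. lift2 SH SA (\<lambda>y2 z2. F (muH y1 y2) z1 z2) (rho b))"
    and "bilin SA SA U (\<lambda>b1 b2. lift2 SH SA (\<lambda>y1 z1. lift2 SH SA (\<lambda>y2 z2. F (muH y1 y2) z1 z2) (rho b2)) (rho b1))"
proof -
  note inner = trilin_muH_bilin[OF F]
  show outer: "bilin SH SA U (\<lambda>y1 z1. lift2 SH SA (\<lambda>y2 z2. F (muH y1 y2) z1 z2) (rho b))" for b
    by (rule bilin_lift2_param[OF vsH vsA U memrho]) (use inner in auto)
  show "bilin SA SA U (\<lambda>b1 b2. lift2 SH SA (\<lambda>y1 z1. lift2 SH SA (\<lambda>y2 z2. F (muH y1 y2) z1 z2) (rho b2)) (rho b1))"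
    by (intro bilinI lin_lift2_param[OF vsA U memrho] lin_lift2_comp[OF lin_rho vsH U] ballI outer inner)
qed

lemma comodule_coalgebra_lhs_natural:
  assumes U: "separating U" and V: "separating V" and F: "trilin SH SA SA U F" and \<psi>: "lin U V \<psi>"
  shows "\<psi> (lift2 SH SA (\<lambda>y z. lift2 SA SA (F y) (DA z)) (rho b))
       = lift2 SH SA (\<lambda>y z. lift2 SA SA (\<lambda>z1 z2. \<psi> (F y z1 z2)) (DA z)) (rho b)"
  by (rule lift2_comm_cong[OF vsH U V comodule_coalgebra_lhs_bilin[OF U F] \<psi> memrho])
     (rule lift2_comm[OF vsA U V trilinD(1)[OF F memH] \<psi> memDA])

lemma comodule_coalgebra_rhs_natural:
  assumes U: "separating U" and V: "separating V" and F: "trilin SH SA SA U F" and \<psi>: "lin U V \<psi>"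
  shows "\<psi> (lift2 SA SA (\<lambda>b1 b2. lift2 SH SA (\<lambda>y1 z1. lift2 SH SA (\<lambda>y2 z2. F (muH y1 y2) z1 z2) (rho b2)) (rho b1)) (DA b))
       = lift2 SA SA (\<lambda>b1 b2. lift2 SH SA (\<lambda>y1 z1. lift2 SH SA (\<lambda>y2 z2. \<psi> (F (muH y1 y2) z1 z2)) (rho b2)) (rho b1)) (DA b)"
  by (rule lift2_comm_cong[OF vsA U V comodule_coalgebra_rhs_bilin(2)[OF U F] \<psi> memDA],
      rule lift2_comm_cong[OF vsH U V comodule_coalgebra_rhs_bilin(1)[OF U F] \<psi> memrho],
      rule lift2_comm[OF vsH U V trilin_muH_bilin(1)[OF F] \<psi> memrho])

lemma comodule_coalgebra_lift2:
  assumes U: "separating U" and F: "trilin SH SA SA U F"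
  shows "lift2 SH SA (\<lambda>y z. lift2 SA SA (F y) (DA z)) (rho b)
    = lift2 SA SA (\<lambda>b1 b2. lift2 SH SA (\<lambda>y1 z1. lift2 SH SA (\<lambda>y2 z2. F (muH y1 y2) z1 z2) (rho b2)) (rho b1)) (DA b)"
proof (rule separating_eqI[OF U])
  show "lift2 SH SA (\<lambda>y z. lift2 SA SA (F y) (DA z)) (rho b) \<in> fst U"
    by (rule lift2_mem[OF U comodule_coalgebra_lhs_bilin[OF U F] memrho])
  show "lift2 SA SA (\<lambda>b1 b2. lift2 SH SA (\<lambda>y1 z1. lift2 SH SA (\<lambda>y2 z2. F (muH y1 y2) z1 z2) (rho b2)) (rho b1)) (DA b) \<in> fst U"
    by (rule lift2_mem[OF U comodule_coalgebra_rhs_bilin(2)[OF U F] memDA])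
  fix \<phi> assume \<phi>: "lin U Kspace \<phi>"
  define B where "B y z1 z2 = \<phi> (F y z1 z2)" for y z1 z2
  have B: "trilin SH SA SA Kspace B" unfolding B_def by (rule trilin_comp[OF F \<phi>])
  note T = trilin_tens3[of SH SA SA]
  have "\<phi> (lift2 SH SA (\<lambda>y z. lift2 SA SA (F y) (DA z)) (rho b))
      = (lift2 SH SA (\<lambda>y z. lift2 SA SA (tens3 SH SA SA y) (DA z)) (rho b)) B"
    unfolding comodule_coalgebra_lhs_natural[OF U separating_Kspace F \<phi>]
      comodule_coalgebra_lhs_natural[OF separating_fun_space separating_Kspace T lin_eval]
    by (simp add: B_def tens3_eval[OF B])
  also have "\<dots> = (lift2 SA SA (\<lambda>b1 b2. lift2 SH SA (\<lambda>y1 z1. lift2 SH SA (\<lambda>y2 z2.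
      tens3 SH SA SA (muH y1 y2) z1 z2) (rho b2)) (rho b1)) (DA b)) B"
    by (simp only: rho_DA)
  also have "\<dots> = \<phi> (lift2 SA SA (\<lambda>b1 b2. lift2 SH SA (\<lambda>y1 z1. lift2 SH SA (\<lambda>y2 z2. F (muH y1 y2) z1 z2) (rho b2)) (rho b1)) (DA b))"
    unfolding comodule_coalgebra_rhs_natural[OF U separating_Kspace F \<phi>]
      comodule_coalgebra_rhs_natural[OF separating_fun_space separating_Kspace T lin_eval]
    by (simp add: B_def tens3_eval[OF B])
  finally show "\<phi> (lift2 SH SA (\<lambda>y z. lift2 SA SA (F y) (DA z)) (rho b)) =
    \<phi> (lift2 SA SA (\<lambda>b1 b2. lift2 SH SA (\<lambda>y1 z1. lift2 SH SA (\<lambda>y2 z2. F (muH y1 y2) z1 z2) (rho b2)) (rho b1)) (DA b))" .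
qed

lemma coaction_coassoc_bilin:
  assumes U: "separating U" and G: "trilin SH SH SA U G"
  shows "bilin SH SH U (\<lambda>y1 y2. G y1 y2 (inv be z))"
    and "bilin SH SA U (\<lambda>y z. lift2 SH SH (\<lambda>y1 y2. G y1 y2 (inv be z)) (DH y))"
    and "bilin SH SA U (\<lambda>y z. lift2 SH SA (G (inv al y)) (rho z))"
proof -
  have inner: "bilin SH SH U (\<lambda>y1 y2. G y1 y2 (inv be z))" for z
    using bilinD(2)[OF trilinD(1)[OF G]] trilinD(2)[OF G] by (auto intro: bilinI)
  then show "bilin SH SH U (\<lambda>y1 y2. G y1 y2 (inv be z))" .
  show "bilin SH SA U (\<lambda>y z. lift2 SH SH (\<lambda>y1 y2. G y1 y2 (inv be z)) (DH y))"
    using lin_comp[OF lin_inv_be bilinD(1)[OF trilinD(1)[OF G]]] inner bilinD[OF inner]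
    by (intro bilinI lin_lift2_param[OF vsA U memDH] lin_lift2_comp[OF lin_DH vsH U] ballI) auto
  show "bilin SH SA U (\<lambda>y z. lift2 SH SA (G (inv al y)) (rho z))"
    using lin_comp[OF lin_inv_al trilinD(2)[OF G]] trilinD(1)[OF G] bilinD[OF trilinD(1)[OF G]]
    by (intro bilinI lin_lift2_param[OF vsH U memrho] lin_lift2_comp[OF lin_rho vsH U] ballI) auto
qed

lemma coaction_coassoc_lhs_natural:
  assumes U: "separating U" and V: "separating V" and G: "trilin SH SH SA U G" and \<psi>: "lin U V \<psi>"
  shows "\<psi> (lift2 SH SA (\<lambda>y z. lift2 SH SH (\<lambda>y1 y2. G y1 y2 (inv be z)) (DH y)) (rho x))
       = lift2 SH SA (\<lambda>y z. lift2 SH SH (\<lambda>y1 y2. \<psi> (G y1 y2 (inv be z))) (DH y)) (rho x)"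
  by (rule lift2_comm_cong[OF vsH U V coaction_coassoc_bilin(2)[OF U G] \<psi> memrho])
     (rule lift2_comm[OF vsH U V coaction_coassoc_bilin(1)[OF U G] \<psi> memDH])

lemma coaction_coassoc_rhs_natural:
  assumes U: "separating U" and V: "separating V" and G: "trilin SH SH SA U G" and \<psi>: "lin U V \<psi>"
  shows "\<psi> (lift2 SH SA (\<lambda>y z. lift2 SH SA (G (inv al y)) (rho z)) (rho x))
       = lift2 SH SA (\<lambda>y z. lift2 SH SA (\<lambda>z1 z2. \<psi> (G (inv al y) z1 z2)) (rho z)) (rho x)"
  by (rule lift2_comm_cong[OF vsH U V coaction_coassoc_bilin(3)[OF U G] \<psi> memrho])
     (rule lift2_comm[OF vsH U V trilinD(1)[OF G memH] \<psi> memrho])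

lemma coaction_coassoc_lift2:
  assumes U: "separating U" and G: "trilin SH SH SA U G"
  shows "lift2 SH SA (\<lambda>y z. lift2 SH SH (\<lambda>y1 y2. G y1 y2 (inv be z)) (DH y)) (rho x)
    = lift2 SH SA (\<lambda>y z. lift2 SH SA (G (inv al y)) (rho z)) (rho x)"
proof (rule separating_eqI[OF U])
  show "lift2 SH SA (\<lambda>y z. lift2 SH SH (\<lambda>y1 y2. G y1 y2 (inv be z)) (DH y)) (rho x) \<in> fst U"
    by (rule lift2_mem[OF U coaction_coassoc_bilin(2)[OF U G] memrho])
  show "lift2 SH SA (\<lambda>y z. lift2 SH SA (G (inv al y)) (rho z)) (rho x) \<in> fst U"
    by (rule lift2_mem[OF U coaction_coassoc_bilin(3)[OF U G] memrho])
  fix \<phi> assume \<phi>: "lin U Kspace \<phi>"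
  define B where "B y1 y2 z = \<phi> (G y1 y2 z)" for y1 y2 z
  have B: "trilin SH SH SA Kspace B" unfolding B_def by (rule trilin_comp[OF G \<phi>])
  note T = trilin_tens3[of SH SH SA]
  have "\<phi> (lift2 SH SA (\<lambda>y z. lift2 SH SH (\<lambda>y1 y2. G y1 y2 (inv be z)) (DH y)) (rho x))
      = (lift2 SH SA (\<lambda>y z. lift2 SH SH (\<lambda>y1 y2. tens3 SH SH SA y1 y2 (inv be z)) (DH y)) (rho x)) B"
    unfolding coaction_coassoc_lhs_natural[OF U separating_Kspace G \<phi>]
      coaction_coassoc_lhs_natural[OF separating_fun_space separating_Kspace T lin_eval]
    by (simp add: B_def tens3_eval[OF B])
  also have "\<dots> = (lift2 SH SA (\<lambda>y z. lift2 SH SA (tens3 SH SH SA (inv al y)) (rho z)) (rho x)) B"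
    by (simp only: rho_coassoc)
  also have "\<dots> = \<phi> (lift2 SH SA (\<lambda>y z. lift2 SH SA (G (inv al y)) (rho z)) (rho x))"
    unfolding coaction_coassoc_rhs_natural[OF U separating_Kspace G \<phi>]
      coaction_coassoc_rhs_natural[OF separating_fun_space separating_Kspace T lin_eval]
    by (simp add: B_def tens3_eval[OF B])
  finally show "\<phi> (lift2 SH SA (\<lambda>y z. lift2 SH SH (\<lambda>y1 y2. G y1 y2 (inv be z)) (DH y)) (rho x))
      = \<phi> (lift2 SH SA (\<lambda>y z. lift2 SH SA (G (inv al y)) (rho z)) (rho x))" .
qed

lemma alz_muH_alz: "alz (-2) (muH (alz m y) (alz (-1) h1)) = muH (alz (m - 2) y) (alz (-3) h1)"
  by (simp add: alz_mult alz_alz algebra_simps)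

lemma muH_alz_reassoc: "muH (alz (m - 1) y') (alz (-2) (muH (alz m y) (alz (-1) h1))) = muH (alz (m - 2) (muH y' y)) (alz (-2) h1)"
proof -
  have a: "alz (m - 1) y' = al (alz (m - 2) y')" using al_alz[of "m - 2" y'] by (simp add: algebra_simps)
  have b: "alz (-2) h1 = al (alz (-3) h1)" using al_alz[of "-3" h1] by simp
  show ?thesis unfolding alz_muH_alz a b muH_hom_assoc alz_muH ..
qed

lemma tens_be_cstruct: "tAH (be z) h2 = cstruct (tAH z (alz (-1) h2))"
  unfolding cstruct_tens al_alz by simp

lemma cmult_cantipode_tens: "cmult (cantipode (tAH a1 (muH (alz m y) (alz (-1) h1)))) (tAH (be z) h2)
  = lift2 SH SA (\<lambda>y' z'. cmult (tAH uA (al (SH' (muH (alz (m - 2) (muH y' y)) (alz (-2) h1))))) (tAH (muA (SA' z') z) h2)) (rho a1)"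
proof -
  have "cmult (cantipode (tAH a1 (muH (alz m y) (alz (-1) h1)))) (tAH (be z) h2)
    = lift2 SH SA (\<lambda>y' z'. cmult (cmult (tAH uA (SH' (muH (alz (m - 1) y') (alz (-2) (muH (alz m y) (alz (-1) h1))))))
          (tAH (SA' z') uH)) (tAH (be z) h2)) (rho a1)"
    unfolding cantipode_tens
    by (rule lift2_comm[OF vsH sepAH sepAH _ _ memrho]) (intro lin_intros ballI)+
  also have "\<dots> = lift2 SH SA (\<lambda>y' z'. cmult (tAH uA (al (SH' (muH (alz (m - 2) (muH y' y)) (alz (-2) h1))))) (tAH (muA (SA' z') z) h2)) (rho a1)"
  proof (rule lift2_cong[OF memrho])
    fix y' z'
    have "cmult (cmult (tAH uA (SH' (muH (alz (m - 1) y') (alz (-2) (muH (alz m y) (alz (-1) h1))))))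
          (tAH (SA' z') uH)) (tAH (be z) h2)
      = cmult (cstruct (tAH uA (SH' (muH (alz (m - 1) y') (alz (-2) (muH (alz m y) (alz (-1) h1)))))))
          (cmult (tAH (SA' z') uH) (tAH z (alz (-1) h2)))"
      unfolding tens_be_cstruct[of z h2] by (rule cmult_hom_assoc[symmetric]) (intro lin_intros)+
    also have "\<dots> = cmult (tAH uA (al (SH' (muH (alz (m - 2) (muH y' y)) (alz (-2) h1))))) (tAH (muA (SA' z') z) h2)"
      unfolding cstruct_tens cmult_tens_unitH be_unit muH_alz_reassoc al_alz by simp
    finally show "cmult (cmult (tAH uA (SH' (muH (alz (m - 1) y') (alz (-2) (muH (alz m y) (alz (-1) h1))))))
          (tAH (SA' z') uH)) (tAH (be z) h2) = cmult (tAH uA (al (SH' (muH (alz (m - 2) (muH y' y)) (alz (-2) h1))))) (tAH (muA (SA' z') z) h2)" .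
  qed
  finally show ?thesis .
qed

abbreviation left_summand where
  "left_summand h Y c \<equiv> lift2 SH SH (\<lambda>h1 h2.
     cmult (tAH uA (al (SH' (muH (alz (m - 2) Y) (alz (-2) h1))))) (tAH c h2)) (DH h)"

lemma cantipode_left_tens_regroup:
  "lift2 AH AH (\<lambda>x1 x2. cmult (cantipode x1) x2) (ccomult (tAH a h))
   = lift2 SH SA (\<lambda>Y Z. lift2 SA SA (\<lambda>z1 z2. left_summand h Y (muA (SA' z1) z2)) (DA Z)) (rho a)" (is "?lhs = _")
proof -
  let ?T = "\<lambda>y' y z' z h1 h2. cmult (tAH uA (al (SH' (muH (alz (m - 2) (muH y' y)) (alz (-2) h1))))) (tAH (muA (SA' z') z) h2)"
  have "?lhs = lift2 SA SA (\<lambda>a1 a2. lift2 SH SA (\<lambda>y z. lift2 SH SH (\<lambda>h1 h2.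
       cmult (cantipode (tAH a1 (muH (alz m y) (alz (-1) h1)))) (tAH (be z) h2)) (DH h)) (rho a2)) (DA a)"
    unfolding ccomult_tens
    apply (intro lift2_comm_cong[where \<phi>="lift2 AH AH (\<lambda>x1 x2. cmult (cantipode x1) x2)" and U="tspace AH AH" and V=AH] lin_intros ballI)
    apply assumption+
    apply (rule lift2_tens[OF sepAH])
      apply (intro lin_intros ballI | assumption)+
    done
  also have "\<dots> = lift2 SA SA (\<lambda>a1 a2. lift2 SH SA (\<lambda>y z. lift2 SH SH (\<lambda>h1 h2.
       lift2 SH SA (\<lambda>y' z'. ?T y' y z' z h1 h2) (rho a1)) (DH h)) (rho a2)) (DA a)"
    by (intro lift2_cong memDA memrho memDH) (rule cmult_cantipode_tens)
  also have "\<dots> = lift2 SA SA (\<lambda>a1 a2. lift2 SH SA (\<lambda>y z. lift2 SH SA (\<lambda>y' z'.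
       lift2 SH SH (\<lambda>h1 h2. ?T y' y z' z h1 h2) (DH h)) (rho a1)) (rho a2)) (DA a)"
    apply (intro lift2_cong memDA memrho)
    apply (rule lift2_swap[OF vsH vsH sepAH memDH memrho _ _ vsH vsA])
     apply (intro lin_intros ballI)+
    done
  also have "\<dots> = lift2 SA SA (\<lambda>a1 a2. lift2 SH SA (\<lambda>y' z'. lift2 SH SA (\<lambda>y z.
       left_summand h (muH y' y) (muA (SA' z') z)) (rho a2)) (rho a1)) (DA a)"
    apply (intro lift2_cong memDA)
    apply (rule lift2_swap[OF vsH vsA sepAH memrho memrho _ _ vsH vsA])
     apply (intro lin_intros ballI)+
    done
  also have "\<dots> = lift2 SH SA (\<lambda>Y Z. lift2 SA SA (\<lambda>z1 z2. left_summand h Y (muA (SA' z1) z2)) (DA Z)) (rho a)"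
    by (rule comodule_coalgebra_lift2[OF sepAH, symmetric]) (intro lin_intros ballI)+
  finally show ?thesis .
qed

lemma cantipode_left_tens_collapse:
  "lift2 SH SA (\<lambda>Y Z. lift2 SA SA (\<lambda>z1 z2. left_summand h Y (muA (SA' z1) z2)) (DA Z)) (rho a)
   = tscale (eA a) (left_summand h uH uA)" (is "?lhs = _")
proof -
  have "?lhs = lift2 SH SA (\<lambda>Y Z. tscale (eA Z) (left_summand h Y uA)) (rho a)"
  proof (rule lift2_cong[OF memrho])
    fix Y Z
    have lP: "lin SA AH (left_summand h Y)" by (intro lin_intros ballI)
    have "lift2 SA SA (\<lambda>z1 z2. left_summand h Y (muA (SA' z1) z2)) (DA Z) = left_summand h Y (lift2 SA SA (\<lambda>z1 z2. muA (SA' z1) z2) (DA Z))"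
      by (rule lift2_comm[OF vsA sepA sepAH _ lP memDA, symmetric]) (intro lin_intros ballI)+
    also have "\<dots> = left_summand h Y (sA (eA Z) uA)" using SA_conv by simp
    also have "\<dots> = tscale (eA Z) (left_summand h Y uA)" using linD(3)[OF lP, of uA "eA Z"] by (simp add: tspace_simps(2))
    finally show "lift2 SA SA (\<lambda>z1 z2. left_summand h Y (muA (SA' z1) z2)) (DA Z) = tscale (eA Z) (left_summand h Y uA)" .
  qed
  also have "\<dots> = tscale (eA a) (left_summand h uH uA)"
  proof -
    have lP: "lin SH AH (\<lambda>Y. left_summand h Y uA)" by (intro lin_intros ballI)
    have "lift2 SH SA (\<lambda>Y Z. tscale (eA Z) (left_summand h Y uA)) (rho a) = lift2 SH SA (\<lambda>Y Z. left_summand h (sH (eA Z) Y) uA) (rho a)"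
      by (rule lift2_cong[OF memrho]) (use linD(3)[OF lP] in \<open>simp add: tspace_simps(2)\<close>)
    also have "\<dots> = left_summand h (lift2 SH SA (\<lambda>Y Z. sH (eA Z) Y) (rho a)) uA"
      by (rule lift2_comm[OF vsH sepH sepAH _ lP memrho, symmetric]) (intro lin_intros ballI)+
    also have "\<dots> = tscale (eA a) (left_summand h uH uA)"
      unfolding rho_eA using linD(3)[OF lP, of uH "eA a"] by (simp add: tspace_simps(2))
    finally show ?thesis .
  qed
  finally show ?thesis .
qed

lemma left_summand_unit: "left_summand h uH uA = tscale (eH h) cunit"
proof -
  have "left_summand h uH uA = lift2 SH SH (\<lambda>h1 h2. cmult (tAH uA (SH' h1)) (tAH uA h2)) (DH h)"
    by (rule lift2_cong[OF memDH]) (simp add: alz_unit muH_unit_left al_alz al_SH')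
  also have "\<dots> = lift2 SH SH (\<lambda>x y. lift2 SH SH (\<lambda>x1 x2. lift2 SH SH (\<lambda>y1 y2.
     tAH (muA uA (be (sig (alz k x1) (alz k y1)))) (al (muH x2 y2))) (DH y)) (DH (SH' x))) (DH h)"
    by (rule lift2_cong[OF memDH]) (rule cmult_tens_unitA)
  also have "\<dots> = tscale (eH h) cunit" unfolding sigma_antipode_S_id_twisted cp_unit_def be_unit ..
  finally show ?thesis .
qed

lemma cantipode_left_tens: "lift2 AH AH (\<lambda>x1 x2. cmult (cantipode x1) x2) (ccomult (tAH a h)) = tscale (ccounit (tAH a h)) cunit"
  unfolding cantipode_left_tens_regroup cantipode_left_tens_collapse left_summand_unit ccounit_tens
  by (simp add: tscale_simps)

lemma cantipode_tens_be: "cantipode (tAH (be z) h2) = lift2 SH SA (\<lambda>y'' z''.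
    cmult (tAH uA (SH' (muH (alz m y'') (alz (-2) h2)))) (tAH (SA' (be z'')) uH)) (rho z)"
proof -
  have "cantipode (tAH (be z) h2) = lift2 SH SA (\<lambda>y'' z''.
    cmult (tAH uA (SH' (muH (alz (m - 1) (al y'')) (alz (-2) h2)))) (tAH (SA' (be z'')) uH)) (rho z)"
    unfolding cantipode_tens rho_be
    by (rule lift2_lift2_tens[OF vsH vsH vsA sepAH _ _ _ memrho]) (intro lin_intros ballI conjI)+
  then show ?thesis unfolding alz_al by simp
qed

lemma cmult_tens_cantipode: "cmult (tAH a1 (muH (alz m y) (alz (-1) h1))) (cantipode (tAH (be z) h2))
  = lift2 SH SA (\<lambda>y'' z''. cmult (twisted_sigma (inv be a1) (muH (alz (m - 1) y) (alz (-2) h1)) (SH' (muH (alz m y'') (alz (-2) h2))))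
        (tAH (be (SA' (be z''))) uH)) (rho z)"
proof -
  have "cmult (tAH a1 (muH (alz m y) (alz (-1) h1))) (cantipode (tAH (be z) h2))
    = lift2 SH SA (\<lambda>y'' z''. cmult (tAH a1 (muH (alz m y) (alz (-1) h1)))
        (cmult (tAH uA (SH' (muH (alz m y'') (alz (-2) h2)))) (tAH (SA' (be z'')) uH))) (rho z)"
    unfolding cantipode_tens_be
    by (rule lift2_comm[OF vsH sepAH sepAH _ _ memrho]) (intro lin_intros ballI)+
  also have "\<dots> = lift2 SH SA (\<lambda>y'' z''. cmult (twisted_sigma (inv be a1) (muH (alz (m - 1) y) (alz (-2) h1)) (SH' (muH (alz m y'') (alz (-2) h2))))
        (tAH (be (SA' (be z''))) uH)) (rho z)"
  proof (rule lift2_cong[OF memrho])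
    fix y'' z''
    have g: "tAH a1 (muH (alz m y) (alz (-1) h1)) = cstruct (tAH (inv be a1) (alz (-1) (muH (alz m y) (alz (-1) h1))))"
      unfolding cstruct_tens inv_simps al_alz by simp
    have h: "alz (-1) (muH (alz m y) (alz (-1) h1)) = muH (alz (m - 1) y) (alz (-2) h1)"
      by (simp add: alz_mult alz_alz algebra_simps)
    have "cmult (tAH a1 (muH (alz m y) (alz (-1) h1)))
        (cmult (tAH uA (SH' (muH (alz m y'') (alz (-2) h2)))) (tAH (SA' (be z'')) uH))
      = cmult (cstruct (tAH (inv be a1) (alz (-1) (muH (alz m y) (alz (-1) h1)))))
        (cmult (tAH uA (SH' (muH (alz m y'') (alz (-2) h2)))) (tAH (SA' (be z'')) uH))"
      by (simp only: g[symmetric])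
    also have "\<dots> = cmult (cmult (tAH (inv be a1) (alz (-1) (muH (alz m y) (alz (-1) h1)))) (tAH uA (SH' (muH (alz m y'') (alz (-2) h2)))))
       (cstruct (tAH (SA' (be z'')) uH))"
      by (rule cmult_hom_assoc) (intro lin_intros)+
    also have "\<dots> = cmult (twisted_sigma (inv be a1) (muH (alz (m - 1) y) (alz (-2) h1)) (SH' (muH (alz m y'') (alz (-2) h2))))
        (tAH (be (SA' (be z''))) uH)"
      unfolding h cmult_tens_unitA cstruct_tens al_unit ..
    finally show "cmult (tAH a1 (muH (alz m y) (alz (-1) h1)))
        (cmult (tAH uA (SH' (muH (alz m y'') (alz (-2) h2)))) (tAH (SA' (be z'')) uH))
      = cmult (twisted_sigma (inv be a1) (muH (alz (m - 1) y) (alz (-2) h1)) (SH' (muH (alz m y'') (alz (-2) h2))))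
        (tAH (be (SA' (be z''))) uH)" .
  qed
  finally show ?thesis .
qed

abbreviation right_summand where
  "right_summand a1 Z q1 q2 \<equiv> cmult (twisted_sigma (inv be a1) q1 (SH' q2)) (tAH (be (SA' Z)) uH)"

lemma cantipode_right_tens_expand:
  "lift2 AH AH (\<lambda>x1 x2. cmult x1 (cantipode x2)) (ccomult (tAH a h))
   = lift2 SA SA (\<lambda>a1 a2. lift2 SH SH (\<lambda>h1 h2. lift2 SH SA (\<lambda>y z.
       lift2 SH SA (\<lambda>y'' z''. right_summand a1 (be z'') (muH (alz (m - 1) y) (alz (-2) h1)) (muH (alz m y'') (alz (-2) h2))) (rho z)) (rho a2)) (DH h)) (DA a)" (is "?lhs = _")
proof -
  have "?lhs = lift2 SA SA (\<lambda>a1 a2. lift2 SH SA (\<lambda>y z. lift2 SH SH (\<lambda>h1 h2.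
       cmult (tAH a1 (muH (alz m y) (alz (-1) h1))) (cantipode (tAH (be z) h2))) (DH h)) (rho a2)) (DA a)"
    unfolding ccomult_tens
    apply (intro lift2_comm_cong[where \<phi>="lift2 AH AH (\<lambda>x1 x2. cmult x1 (cantipode x2))" and U="tspace AH AH" and V=AH] lin_intros ballI)
    apply assumption+
    apply (rule lift2_tens[OF sepAH])
      apply (intro lin_intros ballI | assumption)+
    done
  also have "\<dots> = lift2 SA SA (\<lambda>a1 a2. lift2 SH SA (\<lambda>y z. lift2 SH SH (\<lambda>h1 h2.
       lift2 SH SA (\<lambda>y'' z''. right_summand a1 (be z'') (muH (alz (m - 1) y) (alz (-2) h1)) (muH (alz m y'') (alz (-2) h2))) (rho z)) (DH h)) (rho a2)) (DA a)"
    by (intro lift2_cong memDA memrho memDH) (rule cmult_tens_cantipode)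
  also have "\<dots> = lift2 SA SA (\<lambda>a1 a2. lift2 SH SH (\<lambda>h1 h2. lift2 SH SA (\<lambda>y z.
       lift2 SH SA (\<lambda>y'' z''. right_summand a1 (be z'') (muH (alz (m - 1) y) (alz (-2) h1)) (muH (alz m y'') (alz (-2) h2))) (rho z)) (rho a2)) (DH h)) (DA a)"
    apply (intro lift2_cong memDA)
    apply (rule lift2_swap[OF vsH vsA sepAH memrho memDH _ _ vsH vsH])
     apply (intro lin_intros ballI)+
    done
  finally show ?thesis .
qed

lemma cantipode_right_tens_regroup:
  "lift2 SA SA (\<lambda>a1 a2. lift2 SH SH (\<lambda>h1 h2. lift2 SH SA (\<lambda>y z.
       lift2 SH SA (\<lambda>y'' z''. right_summand a1 (be z'') (muH (alz (m - 1) y) (alz (-2) h1)) (muH (alz m y'') (alz (-2) h2))) (rho z)) (rho a2)) (DH h)) (DA a)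
   = lift2 SA SA (\<lambda>a1 a2. lift2 SH SA (\<lambda>Y Z.
       lift2 SH SH (right_summand a1 Z) (DH (muH (alz m Y) (alz (-2) h)))) (rho a2)) (DA a)" (is "?lhs = _")
proof -
  have "?lhs = lift2 SA SA (\<lambda>a1 a2. lift2 SH SH (\<lambda>h1 h2. lift2 SH SA (\<lambda>Y Z.
       lift2 SH SH (\<lambda>Y1 Y2. right_summand a1 Z (muH (alz m Y1) (alz (-2) h1)) (muH (alz m Y2) (alz (-2) h2))) (DH Y)) (rho a2)) (DH h)) (DA a)"
  proof (rule lift2_cong[OF memDA], rule lift2_cong[OF memDH])
    fix a1 a2 h1 h2
    have "lift2 SH SA (\<lambda>y z. lift2 SH SA (\<lambda>y'' z''. right_summand a1 (be z'') (muH (alz (m - 1) y) (alz (-2) h1)) (muH (alz m y'') (alz (-2) h2))) (rho z)) (rho a2)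
      = lift2 SH SA (\<lambda>y z. lift2 SH SA (\<lambda>y'' z''. right_summand a1 (be z'') (muH (alz (m - 1) (al (inv al y))) (alz (-2) h1)) (muH (alz m y'') (alz (-2) h2))) (rho z)) (rho a2)"
      unfolding inv_simps ..
    also have "\<dots> = lift2 SH SA (\<lambda>Y Z. lift2 SH SH (\<lambda>Y1 Y2. right_summand a1 (be (inv be Z)) (muH (alz (m - 1) (al Y1)) (alz (-2) h1)) (muH (alz m Y2) (alz (-2) h2))) (DH Y)) (rho a2)"
      by (rule coaction_coassoc_lift2[OF sepAH, symmetric]) (intro lin_intros ballI)+
    also have "\<dots> = lift2 SH SA (\<lambda>Y Z.
       lift2 SH SH (\<lambda>Y1 Y2. right_summand a1 Z (muH (alz m Y1) (alz (-2) h1)) (muH (alz m Y2) (alz (-2) h2))) (DH Y)) (rho a2)"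
      by (intro lift2_cong memrho memDH) (simp add: alz_al inv_simps)
    finally show "lift2 SH SA (\<lambda>y z. lift2 SH SA (\<lambda>y'' z''. right_summand a1 (be z'') (muH (alz (m - 1) y) (alz (-2) h1)) (muH (alz m y'') (alz (-2) h2))) (rho z)) (rho a2)
      = lift2 SH SA (\<lambda>Y Z.
       lift2 SH SH (\<lambda>Y1 Y2. right_summand a1 Z (muH (alz m Y1) (alz (-2) h1)) (muH (alz m Y2) (alz (-2) h2))) (DH Y)) (rho a2)" .
  qed
  also have "\<dots> = lift2 SA SA (\<lambda>a1 a2. lift2 SH SA (\<lambda>Y Z. lift2 SH SH (\<lambda>Y1 Y2. lift2 SH SH (\<lambda>h1 h2.
       right_summand a1 Z (muH (alz m Y1) (alz (-2) h1)) (muH (alz m Y2) (alz (-2) h2))) (DH h)) (DH Y)) (rho a2)) (DA a)"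
  proof (intro lift2_cong memDA)
    fix a1 a2
    have "lift2 SH SH (\<lambda>h1 h2. lift2 SH SA (\<lambda>Y Z.
       lift2 SH SH (\<lambda>Y1 Y2. right_summand a1 Z (muH (alz m Y1) (alz (-2) h1)) (muH (alz m Y2) (alz (-2) h2))) (DH Y)) (rho a2)) (DH h)
     = lift2 SH SA (\<lambda>Y Z. lift2 SH SH (\<lambda>h1 h2.
       lift2 SH SH (\<lambda>Y1 Y2. right_summand a1 Z (muH (alz m Y1) (alz (-2) h1)) (muH (alz m Y2) (alz (-2) h2))) (DH Y)) (DH h)) (rho a2)"
      by (rule lift2_swap[OF vsH vsH sepAH memDH memrho _ _ vsH vsA]) (intro lin_intros ballI)+
    also have "\<dots> = lift2 SH SA (\<lambda>Y Z. lift2 SH SH (\<lambda>Y1 Y2. lift2 SH SH (\<lambda>h1 h2.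
       right_summand a1 Z (muH (alz m Y1) (alz (-2) h1)) (muH (alz m Y2) (alz (-2) h2))) (DH h)) (DH Y)) (rho a2)"
      apply (intro lift2_cong memrho)
      apply (rule lift2_swap[OF vsH vsH sepAH memDH memDH _ _ vsH vsH])
       apply (intro lin_intros ballI)+
      done
    finally show "lift2 SH SH (\<lambda>h1 h2. lift2 SH SA (\<lambda>Y Z.
       lift2 SH SH (\<lambda>Y1 Y2. right_summand a1 Z (muH (alz m Y1) (alz (-2) h1)) (muH (alz m Y2) (alz (-2) h2))) (DH Y)) (rho a2)) (DH h)
     = lift2 SH SA (\<lambda>Y Z. lift2 SH SH (\<lambda>Y1 Y2. lift2 SH SH (\<lambda>h1 h2.
       right_summand a1 Z (muH (alz m Y1) (alz (-2) h1)) (muH (alz m Y2) (alz (-2) h2))) (DH h)) (DH Y)) (rho a2)" .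
  qed
  also have "\<dots> = lift2 SA SA (\<lambda>a1 a2. lift2 SH SA (\<lambda>Y Z.
       lift2 SH SH (right_summand a1 Z) (DH (muH (alz m Y) (alz (-2) h)))) (rho a2)) (DA a)"
    by (intro lift2_cong memDA memrho, rule lift2_DH_muH_alz[symmetric]) (intro lin_intros ballI)+
  finally show ?thesis .
qed

lemma cantipode_right_tens_collapse:
  "lift2 SA SA (\<lambda>a1 a2. lift2 SH SA (\<lambda>Y Z.
       lift2 SH SH (right_summand a1 Z) (DH (muH (alz m Y) (alz (-2) h)))) (rho a2)) (DA a)
   = tscale (ccounit (tAH a h)) cunit" (is "?lhs = _")
proof -
  have "?lhs = lift2 SA SA (\<lambda>a1 a2. lift2 SH SA (\<lambda>Y Z.
       tscale (eH Y * eH h) (tAH (muA a1 (be (SA' Z))) uH)) (rho a2)) (DA a)"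
  proof (intro lift2_cong memDA memrho)
    fix a1 a2 Y Z
    let ?q = "muH (alz m Y) (alz (-2) h)"
    have "lift2 SH SH (right_summand a1 Z) (DH ?q) = cmult (lift2 SH SH (\<lambda>q1 q2. twisted_sigma (inv be a1) q1 (SH' q2)) (DH ?q)) (tAH (be (SA' Z)) uH)"
      by (rule lift2_comm[OF vsH sepAH sepAH _ _ memDH, symmetric]) (intro lin_intros ballI)+
    also have "\<dots> = cmult (tscale (eH ?q) (tAH (be (inv be a1)) uH)) (tAH (be (SA' Z)) uH)"
      using sigma_antipode_id_S_twisted[of "inv be a1" ?q] by simp
    also have "\<dots> = tscale (eH Y * eH h) (tAH (muA a1 (be (SA' Z))) uH)"
      by (simp add: cmult_tscale memtens cmult_tens_unitH inv_simps al_unit eH_muH eH_alz)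
    finally show "lift2 SH SH (right_summand a1 Z) (DH ?q) = tscale (eH Y * eH h) (tAH (muA a1 (be (SA' Z))) uH)" .
  qed
  also have "\<dots> = lift2 SA SA (\<lambda>a1 a2. tscale (eH h) (tAH (muA a1 (SA' a2)) uH)) (DA a)"
  proof (intro lift2_cong memDA)
    fix a1 a2
    let ?Th = "\<lambda>c. tscale (eH h) (tAH (muA a1 (be (SA' c))) uH)"
    have lT: "lin SA AH ?Th" by (intro lin_intros ballI)
    have "lift2 SH SA (\<lambda>Y Z. tscale (eH Y * eH h) (tAH (muA a1 (be (SA' Z))) uH)) (rho a2)
       = lift2 SH SA (\<lambda>Y Z. ?Th (sA (eH Y) Z)) (rho a2)"
      by (rule lift2_cong[OF memrho]) (simp add: scale_simps tscale_simps mult.commute)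
    also have "\<dots> = ?Th (lift2 SH SA (\<lambda>Y Z. sA (eH Y) Z) (rho a2))"
      by (rule lift2_comm[OF vsH sepA sepAH _ lT memrho, symmetric]) (intro lin_intros ballI)+
    also have "\<dots> = tscale (eH h) (tAH (muA a1 (SA' a2)) uH)"
      unfolding rho_counit using SA_comm inv_simps by metis
    finally show "lift2 SH SA (\<lambda>Y Z. tscale (eH Y * eH h) (tAH (muA a1 (be (SA' Z))) uH)) (rho a2)
       = tscale (eH h) (tAH (muA a1 (SA' a2)) uH)" .
  qed
  also have "\<dots> = tscale (ccounit (tAH a h)) cunit"
  proof -
    let ?Th = "\<lambda>c. tscale (eH h) (tAH c uH)"
    have lT: "lin SA AH ?Th" by (intro lin_intros ballI)
    have "lift2 SA SA (\<lambda>a1 a2. tscale (eH h) (tAH (muA a1 (SA' a2)) uH)) (DA a) = ?Th (lift2 SA SA (\<lambda>a1 a2. muA a1 (SA' a2)) (DA a))"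
      by (rule lift2_comm[OF vsA sepA sepAH _ lT memDA, symmetric]) (intro lin_intros ballI)+
    also have "\<dots> = ?Th (sA (eA a) uA)" using SA_conv by simp
    finally show ?thesis unfolding ccounit_tens cp_unit_def by (simp add: scale_simps tscale_simps mult.commute)
  qed
  finally show ?thesis .
qed

lemma cantipode_right_tens: "lift2 AH AH (\<lambda>x1 x2. cmult x1 (cantipode x2)) (ccomult (tAH a h)) = tscale (ccounit (tAH a h)) cunit"
  unfolding cantipode_right_tens_expand cantipode_right_tens_regroup cantipode_right_tens_collapse ..

lemma lin_ccounit_cunit: "lin AH AH (\<lambda>x. tscale (ccounit x) cunit)"
proof -
  have "lin AH Kspace ccounit" by (rule lin_ccounit)
  moreover have "lin Kspace AH (\<lambda>c. tscale c cunit)"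
    unfolding lin_def cp_unit_def tspace_simps(2) using memtens by (auto simp: tscale_simps memtscale)
  ultimately show ?thesis using lin_comp by blast
qed

lemma cantipode_left: "x \<in> fst AH \<Longrightarrow> lift2 AH AH (\<lambda>x1 x2. cmult (cantipode x1) x2) (ccomult x) = tscale (ccounit x) cunit"
  by (rule lin_ext_tens[OF vsA _ lin_ccounit_cunit cantipode_left_tens]) (intro lin_intros ballI lin_ccomult | assumption)+

lemma cantipode_right: "x \<in> fst AH \<Longrightarrow> lift2 AH AH (\<lambda>x1 x2. cmult x1 (cantipode x2)) (ccomult x) = tscale (ccounit x) cunit"
  by (rule lin_ext_tens[OF vsA _ lin_ccounit_cunit cantipode_right_tens]) (intro lin_intros ballI lin_ccomult | assumption)+

lemma cstruct_cantipode_tens: "cstruct (cantipode (tAH a h)) = cantipode (cstruct (tAH a h))"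
proof -
  have "cstruct (cantipode (tAH a h)) = lift2 SH SA (\<lambda>y z. cstruct (cmult (tAH uA (SH' (muH (alz (m - 1) y) (alz (-2) h)))) (tAH (SA' z) uH))) (rho a)"
    unfolding cantipode_tens by (rule lift2_comm[OF vsH sepAH sepAH _ lin_cstruct memrho]) (intro lin_intros ballI)+
  also have "\<dots> = lift2 SH SA (\<lambda>y z. cmult (tAH uA (SH' (muH (alz m y) (alz (-1) h)))) (tAH (SA' (be z)) uH)) (rho a)"
    by (rule lift2_cong[OF memrho])
       (simp add: cstruct_cmult memtens cstruct_tens be_unit al_muH al_unit al_SH' al_alz SA_comm)
  also have "\<dots> = cantipode (cstruct (tAH a h))"
  proof -
    have "cantipode (cstruct (tAH a h)) = lift2 SH SA (\<lambda>y z. cmult (tAH uA (SH' (muH (alz (m - 1) (al y)) (alz (-2) (al h))))) (tAH (SA' (be z)) uH)) (rho a)"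
      unfolding cstruct_tens cantipode_tens rho_be
      by (rule lift2_lift2_tens[OF vsH vsH vsA sepAH _ _ _ memrho]) (intro lin_intros ballI conjI)+
    then show ?thesis by (simp add: alz_al)
  qed
  finally show ?thesis .
qed

lemma cstruct_cantipode: assumes x: "x \<in> fst AH" shows "cstruct (cantipode x) = cantipode (cstruct x)"
  by (rule lin_ext_tens[OF vsA, where T=SH and U=AH and f="\<lambda>x. cstruct (cantipode x)" and g="\<lambda>x. cantipode (cstruct x)"])
     (intro lin_intros cstruct_cantipode_tens x)+

lemma hom_hopf_crossed_product: "hom_hopf AH cmult cunit ccomult ccounit cstruct cantipode"
  unfolding hom_hopf_def tspace_simps(2)
  using cp_bialg lin_cantipode cstruct_cantipode cantipode_left cantipode_right by blast

end

theorem theorem3p5: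
  fixes sA :: "'k::field \<Rightarrow> 'a::ab_group_add \<Rightarrow> 'a"
    and sH :: "'k \<Rightarrow> 'h::ab_group_add \<Rightarrow> 'h"
    and m k :: int
    and muH :: "'h \<Rightarrow> 'h \<Rightarrow> 'h" and uH :: 'h and DH :: "'h \<Rightarrow> ('k, 'h, 'h) tensor"
    and eH :: "'h \<Rightarrow> 'k" and al :: "'h \<Rightarrow> 'h"
    and muA :: "'a \<Rightarrow> 'a \<Rightarrow> 'a" and uA :: 'a and DA :: "'a \<Rightarrow> ('k, 'a, 'a) tensor"
    and eA :: "'a \<Rightarrow> 'k" and be :: "'a \<Rightarrow> 'a"
    and act :: "'h \<Rightarrow> 'a \<Rightarrow> 'a" and rho :: "'a \<Rightarrow> ('k, 'h, 'a) tensor"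
    and sig :: "'h \<Rightarrow> 'h \<Rightarrow> 'a"
    and SH' :: "'h \<Rightarrow> 'h" and SA' :: "'a \<Rightarrow> 'a"
  defines "SA \<equiv> (UNIV :: 'a set, sA)" and "SH \<equiv> (UNIV :: 'h set, sH)"
  assumes H_bialg: "hom_bialgebra SH muH uH DH eH al"
    and A_alg: "hom_algebra SA muA uA be"
    and A_mod: "weak_hom_module_algebra SH DH eH SA muA uA act"
    and A_comod: "hom_comodule_coalgebra SH muH uH DH eH al SA DA eA be rho"
    and sig_lin: "bilin SH SH SA sig"
    and cp_bialg: "hom_bialgebra (tspace SA SH)
                     (cp_mult SA SH muA muH DH act sig al be m k) (cp_unit SA SH uA uH)
                     (cp_comult SA SH DA rho muH DH al be m) (cp_counit SA SH eA eH)
                     (cp_struct SA SH be al)"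
    and SH_anti: "sigma_antipode SH muH uH DH eH al SA uA sig SH'"
    and SA_lin: "lin SA SA SA'"
    and SA_comm: "\<forall>a. be (SA' a) = SA' (be a)"
    and SA_conv: "\<forall>a. lift2 SA SA (\<lambda>a1 a2. muA (SA' a1) a2) (DA a) = sA (eA a) uA
                   \<and> lift2 SA SA (\<lambda>a1 a2. muA a1 (SA' a2)) (DA a) = sA (eA a) uA"
  shows "hom_hopf (tspace SA SH)
           (cp_mult SA SH muA muH DH act sig al be m k) (cp_unit SA SH uA uH)
           (cp_comult SA SH DA rho muH DH al be m) (cp_counit SA SH eA eH)
           (cp_struct SA SH be al)
           (cp_antipode SA SH muA uA muH uH DH act sig al be rho SH' SA' m k)"
proof -
  interpret crossed_product_hopf sA sH m k muH uH DH eH al muA uA DA eA be act rho sig SH' SA'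
    by unfold_locales (use H_bialg A_alg A_mod A_comod sig_lin cp_bialg SH_anti SA_lin SA_comm SA_conv in
        \<open>simp_all only: SA_def SH_def simp_thms\<close>)
  show ?thesis unfolding SA_def SH_def by (rule hom_hopf_crossed_product)
qed

end
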